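(* Let $T,d\ge1$, $\gamma>0$, $\beta>0$. For each task $t\in\{1,\dots,T\}$ let $(x_{t1},y_{t1}),\dots,(x_{tm_t},y_{tm_t})\in\mathbb{R}^d\times\mathbb{R}$ be independent samples drawn from a task-specific distribution, and write $X_t=[x_{t1},\dots,x_{tm_t}]$. Let $l$ be a loss with $0\le l(y,f(x))\le B$ for all arguments, which is $c$-admissible with respect to the class of linear functions. Let $(A,a_0,U)$, with $A=[a_1,\dots,a_T]\in\mathbb{R}^{d\times T}$, $a_0\in\mathbb{R}^d$ and $U\in\mathbb{R}^{d\times d}$ orthogonal, be an optimal solution of $$\min_{A,a_0,U}\ \sum_{t=1}^{T}\sum_{i=1}^{m_t} l\big(y_{ti},\langle a_t+a_0,U^Tx_{ti}\rangle\big)\quad\text{s.t.}\quad \|A\|_{2,1}^2\le \frac{T}{\gamma},\ \ \|a_0\|_2^2\le\frac1\beta,\ \ U^TU=I.$$ Then for any $\delta>0$, with probability at least $1-\delta$, $$E_x\sum_{t=1}^{T}\sum_{i=1}^{m_t}l\big(y_{ti},\langle a_t+a_0,U^Tx_{ti}\rangle\big)-\sum_{t=1}^{T}\sum_{i=1}^{m_t}l\big(y_{ti},\langle a_t+a_0,U^Tx_{ti}\rangle\big)\le 2c\left(\sqrt{\frac{T}{\gamma}}+\sqrt{\frac1\beta}\right)\sqrt{\sum_{t=1}^{T}m_tS(X_t)}+3B\sqrt{\frac{\sum_{t=1}^{T}m_t\ln(2/\delta)}{2}},$$ where $S(X_t)=\frac{1}{m_t}\sum_{i=1}^{m_t}\|x_{ti}\|_2^2$.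 Moreover, if $m_1=\dots=m_T=m$ and $\|x_t\|_2\le r$ for all $t$, then with probability at least $1-\delta$, $$\frac1T\sum_{t=1}^{T}E_x\,l\big(y_t,\langle a_t+a_0,U^Tx_t\rangle\big)-\frac1T\sum_{t=1}^{T}\frac1m\sum_{i=1}^{m}l\big(y_{ti},\langle a_t+a_0,U^Tx_{ti}\rangle\big)\le\frac{2cr}{\sqrt{\gamma m}}+\frac{2cr}{\sqrt{\beta mT}}+3B\sqrt{\frac{\ln(2/\delta)}{2mT}}.$$
   Context: For $A\in\mathbb{R}^{d\times T}$ with rows $a^1,\dots,a^d$, $\|A\|_{2,1}=\sum_{i=1}^d\|a^i\|_2$. A loss $l$ is $c$-admissible with respect to a hypothesis class $H$ if there is $c\ge0$ such that for all $h,h'\in H$ and all $(x,y)$, $|l(y,h(x))-l(y,h'(x))|\le c|h(x)-h'(x)|$. $E_x$ denotes expectation with respect to the data distribution (over fresh samples of each task); $(x_t,y_t)$ denotes a random sample from task $t$. *)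

theory Defs
  imports "HOL-Probability.Probability"
begin

text \<open>Row-wise (2,1)-norm of the d x T matrix A = [a_0,...,a_{T-1}] whose columns are a t.\<close>
definition norm21 :: "(nat \<Rightarrow> real^'d) \<Rightarrow> nat \<Rightarrow> real" where
  "norm21 a T = (\<Sum>j\<in>UNIV. sqrt (\<Sum>t<T. (a t $ j)^2))"

definition admissible :: "(real \<Rightarrow> real \<Rightarrow> real) \<Rightarrow> real \<Rightarrow> ('x \<Rightarrow> real) set \<Rightarrow> bool" where
  "admissible l c H \<longleftrightarrow> c \<ge> 0 \<and>
     (\<forall>h\<in>H. \<forall>h'\<in>H. \<forall>x y. \<bar>l y (h x) - l y (h' x)\<bar> \<le> c * \<bar>h x - h' x\<bar>)"

definition sample_idx :: "nat \<Rightarrow> (nat \<Rightarrow> nat) \<Rightarrow> (nat \<times> nat) set" where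
  "sample_idx T m = {(t,i). t < T \<and> i < m t}"

definition sample_measure ::
  "(nat \<Rightarrow> 'a measure) \<Rightarrow> nat \<Rightarrow> (nat \<Rightarrow> nat) \<Rightarrow> (nat \<times> nat \<Rightarrow> 'a) measure" where
  "sample_measure D T m = PiM (sample_idx T m) (\<lambda>ti. D (fst ti))"

definition pred :: "(nat \<Rightarrow> real^'d) \<Rightarrow> real^'d \<Rightarrow> real^'d^'d \<Rightarrow> nat \<Rightarrow> real^'d \<Rightarrow> real" where
  "pred a a0 U t x = (a t + a0) \<bullet> (transpose U *v x)"

definition emp_loss ::
  "(real \<Rightarrow> real \<Rightarrow> real) \<Rightarrow> nat \<Rightarrow> (nat \<Rightarrow> nat) \<Rightarrow> (nat \<times> nat \<Rightarrow> (real^'d) \<times> real)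
     \<Rightarrow> (nat \<Rightarrow> real^'d) \<Rightarrow> real^'d \<Rightarrow> real^'d^'d \<Rightarrow> real" where
  "emp_loss l T m z a a0 U =
     (\<Sum>t<T. \<Sum>i<m t. l (snd (z (t,i))) (pred a a0 U t (fst (z (t,i)))))"

definition feasible :: "nat \<Rightarrow> real \<Rightarrow> real \<Rightarrow> (nat \<Rightarrow> real^'d) \<Rightarrow> real^'d \<Rightarrow> real^'d^'d \<Rightarrow> bool" where
  "feasible T \<gamma> \<beta> a a0 U \<longleftrightarrow>
     (norm21 a T)^2 \<le> real T / \<gamma> \<and> (norm a0)^2 \<le> 1 / \<beta> \<and> transpose U ** U = mat 1"

definition optimal ::
  "(real \<Rightarrow> real \<Rightarrow> real) \<Rightarrow> nat \<Rightarrow> (nat \<Rightarrow> nat) \<Rightarrow> real \<Rightarrow> real \<Rightarrow> (nat \<times> nat \<Rightarrow> (real^'d) \<times> real)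
     \<Rightarrow> (nat \<Rightarrow> real^'d) \<Rightarrow> real^'d \<Rightarrow> real^'d^'d \<Rightarrow> bool" where
  "optimal l T m \<gamma> \<beta> z a a0 U \<longleftrightarrow> feasible T \<gamma> \<beta> a a0 U \<and>
     (\<forall>a' a0' U'. feasible T \<gamma> \<beta> a' a0' U' \<longrightarrow> emp_loss l T m z a a0 U \<le> emp_loss l T m z a' a0' U')"

definition S_X :: "(nat \<Rightarrow> nat) \<Rightarrow> (nat \<times> nat \<Rightarrow> (real^'d) \<times> real) \<Rightarrow> nat \<Rightarrow> real" where
  "S_X m z t = (1 / real (m t)) * (\<Sum>i<m t. (norm (fst (z (t,i))))^2)"

end

theory Submission
  imports Defs
begin

(* Every feasible (a, a0, U) predicts with |<a_t + a0, U^T x>| <= (sqrt (T / gamma) + sqrt (1 / beta)) |x|,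
   so the losses form a bounded class and the deviation of the expected from the empirical loss can be
   bounded uniformly over the feasible set. Symmetrization with a ghost sample bounds its expectation by
   twice the empirical Rademacher complexity; the contraction inequality strips off the c-Lipschitz loss,
   and the Rademacher complexity of the linear class is at most
   c (sqrt (T / gamma) + sqrt (1 / beta)) sqrt (sum_t m_t S(X_t)) by Hoelder's inequality for the
   (2,1)-norm, Jensen's inequality and the orthogonality of independent signs. McDiarmid's inequality,
   applied once to the deviation minus twice the Rademacher complexity (bounded differences 3 B),
   turns this into a bound holding with probability 1 - delta, in fact with ln (1 / delta) in place of
   ln (2 / delta). Measurability of the suprema is obtained by restricting to a countable dense subset
   of the feasible set, over which the loss is continuous in the parameters. *)

section \<open>McDiarmid's inequality\<close>

lemma (in prob_space) abs_integral_le_const: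
  fixes f :: "'a \<Rightarrow> real"
  assumes "\<And>x. x \<in> space M \<Longrightarrow> \<bar>f x\<bar> \<le> C"
  shows "\<bar>\<integral>x. f x \<partial>M\<bar> \<le> C"
proof (cases "integrable M f")
  case True
  have "\<bar>\<integral>x. f x \<partial>M\<bar> \<le> (\<integral>x. \<bar>f x\<bar> \<partial>M)" using integral_norm_bound[of M f] by simp
  also have "\<dots> \<le> C" using True assms by (intro integral_le_const AE_I2) auto
  finally show ?thesis .
next
  case False
  obtain x where "x \<in> space M" using not_empty by blast
  then show ?thesis using assms[of x] False by (simp add: not_integrable_integral_eq)
qed

lemma (in product_prob_space) integral_coordinate_bounded_differences:
  fixes f :: "('i \<Rightarrow> 'a) \<Rightarrow> real"
  assumes i: "i \<notin> J"
    and f_meas[measurable]: "f \<in> borel_measurable (PiM (insert i J) M)"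
    and f_bounded: "\<forall>x\<in>space (PiM (insert i J) M). \<bar>f x\<bar> \<le> K"
    and f_diff: "\<forall>j\<in>insert i J. \<forall>x\<in>space (PiM (insert i J) M). \<forall>y\<in>space (M j). \<bar>f x - f (x(j:=y))\<bar> \<le> c j"
  defines "g \<equiv> \<lambda>x. \<integral>y. f (x(i:=y)) \<partial>M i"
  shows "g \<in> borel_measurable (PiM J M)"
    and "\<forall>x\<in>space (PiM J M). \<bar>g x\<bar> \<le> K"
    and "\<forall>j\<in>J. \<forall>x\<in>space (PiM J M). \<forall>y\<in>space (M j). \<bar>g x - g (x(j:=y))\<bar> \<le> c j"
proof -
  have upd_space: "x(i:=y) \<in> space (PiM (insert i J) M)" if "x \<in> space (PiM J M)" "y \<in> space (M i)" for x y
    using that by (auto simp: space_PiM PiE_def extensional_def Pi_def split: if_splits)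
  have section_meas: "(\<lambda>y. f (x(i:=y))) \<in> borel_measurable (M i)" if "x \<in> space (PiM J M)" for x
    using measurable_comp[OF measurable_component_update f_meas, OF that i] by (simp add: comp_def fun_upd_def)
  have section_int: "integrable (M i) (\<lambda>y. f (x(i:=y)))" if "x \<in> space (PiM J M)" for x
    by (rule M.integrable_const_bound[where B=K]) (use f_bounded upd_space[OF that] section_meas[OF that] in auto)
  show "g \<in> borel_measurable (PiM J M)"
    unfolding g_def by measurable
  show "\<forall>x\<in>space (PiM J M). \<bar>g x\<bar> \<le> K"
  proof
    fix x assume x: "x \<in> space (PiM J M)"
    have "\<bar>g x\<bar> \<le> (\<integral>y. \<bar>f (x(i:=y))\<bar> \<partial>M i)"
      unfolding g_def using integral_norm_bound[of "M i" "\<lambda>y. f (x(i:=y))"] by simp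
    also have "\<dots> \<le> (\<integral>y. K \<partial>M i)"
      by (rule integral_mono) (use section_int[OF x] f_bounded upd_space[OF x] in auto)
    finally show "\<bar>g x\<bar> \<le> K" by (simp add: M.prob_space)
  qed
  show "\<forall>j\<in>J. \<forall>x\<in>space (PiM J M). \<forall>y\<in>space (M j). \<bar>g x - g (x(j:=y))\<bar> \<le> c j"
  proof (intro ballI)
    fix j x y assume j: "j \<in> J" and x: "x \<in> space (PiM J M)" and y: "y \<in> space (M j)"
    have x': "x(j:=y) \<in> space (PiM J M)" using x y j by (auto simp: space_PiM PiE_def extensional_def Pi_def)
    have twist: "(x(j:=y))(i:=y') = (x(i:=y'))(j:=y)" for y' using i j by (intro fun_upd_twist) auto
    have int2: "integrable (M i) (\<lambda>y'. f ((x(i:=y'))(j:=y)))"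
      using section_int[OF x'] unfolding twist .
    have "\<bar>g x - g (x(j:=y))\<bar> = \<bar>\<integral>y'. f (x(i:=y')) - f ((x(i:=y'))(j:=y)) \<partial>M i\<bar>"
      unfolding g_def twist using Bochner_Integration.integral_diff[OF section_int[OF x] int2] by simp
    also have "\<dots> \<le> (\<integral>y'. \<bar>f (x(i:=y')) - f ((x(i:=y'))(j:=y))\<bar> \<partial>M i)"
      using integral_norm_bound[of "M i" "\<lambda>y'. f (x(i:=y')) - f ((x(i:=y'))(j:=y))"] by simp
    also have "\<dots> \<le> (\<integral>y'. c j \<partial>M i)"
      by (rule integral_mono) (use section_int[OF x] int2 f_diff upd_space[OF x] j y in auto)
    finally show "\<bar>g x - g (x(j:=y))\<bar> \<le> c j" by (simp add: M.prob_space)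
  qed
qed

lemma (in product_prob_space) coordinate_mgf_bound:
  fixes f :: "('i \<Rightarrow> 'a) \<Rightarrow> real"
  assumes s: "s > 0" and i: "i \<notin> J" and x: "x \<in> space (PiM J M)"
    and f_meas[measurable]: "f \<in> borel_measurable (PiM (insert i J) M)"
    and f_bounded: "\<forall>x\<in>space (PiM (insert i J) M). \<bar>f x\<bar> \<le> K"
    and f_diff: "\<forall>x\<in>space (PiM (insert i J) M). \<forall>y\<in>space (M i). \<bar>f x - f (x(i:=y))\<bar> \<le> c"
  shows "(\<integral>\<^sup>+y. exp (s * (f (x(i:=y)) - \<mu>)) \<partial>M i)
    \<le> ennreal (exp (s * ((\<integral>y. f (x(i:=y)) \<partial>M i) - \<mu>))) * ennreal (exp (s\<^sup>2 * c\<^sup>2 / 8))"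
proof -
  have upd_space: "x(i:=y) \<in> space (PiM (insert i J) M)" if "y \<in> space (M i)" for y
    using that x by (auto simp: space_PiM PiE_def extensional_def Pi_def split: if_splits)
  have section_meas: "(\<lambda>y. f (x(i:=y))) \<in> borel_measurable (M i)"
    using measurable_comp[OF measurable_component_update f_meas, OF x i] by (simp add: comp_def fun_upd_def)
  define a where "a = (INF y\<in>space (M i). f (x(i:=y)))"
  have bdd: "bdd_below ((\<lambda>y. f (x(i:=y))) ` space (M i))"
    using f_bounded upd_space by (intro bdd_belowI[where m="-K"]) force
  have a_le: "a \<le> f (x(i:=y))" if "y \<in> space (M i)" for y
    unfolding a_def using bdd that by (rule cINF_lower)
  have le_a: "f (x(i:=y)) \<le> a + c" if y: "y \<in> space (M i)" for y
  proof -
    have "f (x(i:=y)) - c \<le> f (x(i:=y'))" if "y' \<in> space (M i)" for y'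
      using f_diff[rule_format, of "x(i:=y')" y] upd_space[OF that] y by (simp add: abs_le_iff)
    then have "f (x(i:=y)) - c \<le> a" unfolding a_def using M.not_empty by (intro cINF_greatest) auto
    then show ?thesis by simp
  qed
  interpret H: interval_bounded_random_variable "M i" "\<lambda>y. f (x(i:=y))" a "a + c"
    by unfold_locales (use section_meas a_le le_a in auto)
  define g where "g = (\<integral>y. f (x(i:=y)) \<partial>M i)"
  have "(\<integral>\<^sup>+y. exp (s * (f (x(i:=y)) - \<mu>)) \<partial>M i)
      = (\<integral>\<^sup>+y. ennreal (exp (s * (g - \<mu>))) * ennreal (exp (s * (f (x(i:=y)) - g))) \<partial>M i)"
    by (intro nn_integral_cong) (simp add: ennreal_mult''[symmetric] exp_add[symmetric] algebra_simps)
  also have "\<dots> = ennreal (exp (s * (g - \<mu>))) * (\<integral>\<^sup>+y. exp (s * (f (x(i:=y)) - g)) \<partial>M i)"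
    by (rule nn_integral_cmult) (use section_meas in measurable)
  also have "\<dots> \<le> ennreal (exp (s * (g - \<mu>))) * ennreal (exp (s\<^sup>2 * c\<^sup>2 / 8))"
    using H.Hoeffdings_lemma_nn_integral[OF s] unfolding g_def by (intro mult_left_mono) auto
  finally show ?thesis unfolding g_def .
qed

lemma (in product_prob_space) mcdiarmid_mgf_bound:
  fixes f :: "('i \<Rightarrow> 'a) \<Rightarrow> real"
  assumes "finite J" and s: "s > 0"
    and "f \<in> borel_measurable (PiM J M)"
    and "\<forall>x\<in>space (PiM J M). \<bar>f x\<bar> \<le> K"
    and "\<forall>j\<in>J. \<forall>x\<in>space (PiM J M). \<forall>y\<in>space (M j). \<bar>f x - f (x(j:=y))\<bar> \<le> c j"
  shows "(\<integral>\<^sup>+x. exp (s * (f x - (\<integral>x. f x \<partial>PiM J M))) \<partial>PiM J M)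
    \<le> ennreal (exp (s\<^sup>2 * (\<Sum>j\<in>J. (c j)\<^sup>2) / 8))"
  using assms(1,3-5)
proof (induction J arbitrary: f rule: finite_induct)
  case empty
  then show ?case
    by (simp add: PiM_empty lebesgue_integral_count_space_finite nn_integral_count_space_finite)
next
  case (insert i J f)
  note f_meas[measurable] = insert.prems(1)
  interpret PiJ: prob_space "PiM J M" by (rule prob_space_PiM) (simp add: prob_space)
  interpret PiIJ: prob_space "PiM (insert i J) M" by (rule prob_space_PiM) (simp add: prob_space)
  define g where "g x = (\<integral>y. f (x(i:=y)) \<partial>M i)" for x
  note g_props = integral_coordinate_bounded_differences[OF insert.hyps(2) insert.prems, folded g_def]
  note g_meas[measurable] = g_props(1)
  have f_int: "integrable (PiM (insert i J) M) f"
    by (rule PiIJ.integrable_const_bound[where B=K]) (use insert.prems(2) in auto)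
  define \<mu> where "\<mu> = (\<integral>x. g x \<partial>PiM J M)"
  have mean: "(\<integral>x. f x \<partial>PiM (insert i J) M) = \<mu>"
    unfolding \<mu>_def g_def by (rule product_integral_insert[OF insert.hyps f_int])
  have "(\<integral>\<^sup>+x. exp (s * (f x - \<mu>)) \<partial>PiM (insert i J) M)
      = (\<integral>\<^sup>+x. (\<integral>\<^sup>+y. exp (s * (f (x(i:=y)) - \<mu>)) \<partial>M i) \<partial>PiM J M)"
    by (rule product_nn_integral_insert[OF insert.hyps]) measurable
  also have "\<dots> \<le> (\<integral>\<^sup>+x. ennreal (exp (s\<^sup>2 * (c i)\<^sup>2 / 8)) * ennreal (exp (s * (g x - \<mu>))) \<partial>PiM J M)"
  proof (rule nn_integral_mono)
    fix x assume "x \<in> space (PiM J M)"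
    have "(\<integral>\<^sup>+y. exp (s * (f (x(i:=y)) - \<mu>)) \<partial>M i)
        \<le> ennreal (exp (s * (g x - \<mu>))) * ennreal (exp (s\<^sup>2 * (c i)\<^sup>2 / 8))"
      unfolding g_def
      by (rule coordinate_mgf_bound[OF s insert.hyps(2) \<open>x \<in> space (PiM J M)\<close> f_meas insert.prems(2)])
        (use insert.prems(3) in blast)
    then show "(\<integral>\<^sup>+y. exp (s * (f (x(i:=y)) - \<mu>)) \<partial>M i)
        \<le> ennreal (exp (s\<^sup>2 * (c i)\<^sup>2 / 8)) * ennreal (exp (s * (g x - \<mu>)))"
      by (simp only: mult.commute)
  qed
  also have "\<dots> = ennreal (exp (s\<^sup>2 * (c i)\<^sup>2 / 8)) * (\<integral>\<^sup>+x. exp (s * (g x - \<mu>)) \<partial>PiM J M)"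
    by (rule nn_integral_cmult) measurable
  also have "\<dots> \<le> ennreal (exp (s\<^sup>2 * (c i)\<^sup>2 / 8)) * ennreal (exp (s\<^sup>2 * (\<Sum>j\<in>J. (c j)\<^sup>2) / 8))"
    using insert.IH[OF g_props] by (intro mult_left_mono) (auto simp: \<mu>_def)
  also have "\<dots> = ennreal (exp (s\<^sup>2 * (\<Sum>j\<in>insert i J. (c j)\<^sup>2) / 8))"
    using insert.hyps by (simp add: ennreal_mult''[symmetric] exp_add[symmetric] add_divide_distrib distrib_left)
  finally show ?case unfolding mean .
qed

lemma (in product_prob_space) mcdiarmid_inequality:
  fixes f :: "('i \<Rightarrow> 'a) \<Rightarrow> real"
  assumes fin: "finite J" and \<epsilon>: "\<epsilon> > 0" and C: "(\<Sum>j\<in>J. (c j)\<^sup>2) > 0"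
    and f_meas[measurable]: "f \<in> borel_measurable (PiM J M)"
    and f_bounded: "\<forall>x\<in>space (PiM J M). \<bar>f x\<bar> \<le> K"
    and f_diff: "\<forall>j\<in>J. \<forall>x\<in>space (PiM J M). \<forall>y\<in>space (M j). \<bar>f x - f (x(j:=y))\<bar> \<le> c j"
  shows "measure (PiM J M) {x\<in>space (PiM J M). \<epsilon> \<le> f x - (\<integral>x. f x \<partial>PiM J M)}
    \<le> exp (- 2 * \<epsilon>\<^sup>2 / (\<Sum>j\<in>J. (c j)\<^sup>2))"
proof -
  interpret PiJ: prob_space "PiM J M" by (rule prob_space_PiM) (simp add: prob_space)
  define C where "C = (\<Sum>j\<in>J. (c j)\<^sup>2)"
  define \<mu> where "\<mu> = (\<integral>x. f x \<partial>PiM J M)"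
  \<comment> \<open>the Chernoff parameter minimising \<open>exp (- s \<epsilon> + s\<^sup>2 C / 8)\<close>\<close>
  define s where "s = 4 * \<epsilon> / C"
  have s: "s > 0" using \<epsilon> C by (simp add: s_def C_def)
  have "emeasure (PiM J M) {x\<in>space (PiM J M). \<epsilon> \<le> f x - \<mu>}
      \<le> emeasure (PiM J M) {x\<in>space (PiM J M). 1 \<le> ennreal (exp (- s * \<epsilon>)) * ennreal (exp (s * (f x - \<mu>)))}"
  proof (rule emeasure_mono)
    show "{x \<in> space (PiM J M). \<epsilon> \<le> f x - \<mu>}
        \<subseteq> {x \<in> space (PiM J M). 1 \<le> ennreal (exp (- s * \<epsilon>)) * ennreal (exp (s * (f x - \<mu>)))}"
    proof safe
      fix x assume "\<epsilon> \<le> f x - \<mu>"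
      then have "s * \<epsilon> \<le> s * (f x - \<mu>)" using s by (intro mult_left_mono) auto
      then have "0 \<le> - s * \<epsilon> + s * (f x - \<mu>)" by simp
      then show "1 \<le> ennreal (exp (- s * \<epsilon>)) * ennreal (exp (s * (f x - \<mu>)))"
        by (simp add: ennreal_mult''[symmetric] exp_add[symmetric])
    qed
  qed measurable
  also have "\<dots> \<le> ennreal (exp (- s * \<epsilon>))
      * (\<integral>\<^sup>+x. ennreal (exp (s * (f x - \<mu>))) * indicator (space (PiM J M)) x \<partial>PiM J M)"
    using nn_integral_Markov_inequality[of "\<lambda>x. ennreal (exp (s * (f x - \<mu>)))" "space (PiM J M)"
        "PiM J M" "ennreal (exp (- s * \<epsilon>))"]
    by simp
  also have "(\<integral>\<^sup>+x. ennreal (exp (s * (f x - \<mu>))) * indicator (space (PiM J M)) x \<partial>PiM J M)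
      = (\<integral>\<^sup>+x. exp (s * (f x - \<mu>)) \<partial>PiM J M)"
    by (rule nn_integral_cong) simp
  also have "ennreal (exp (- s * \<epsilon>)) * \<dots> \<le> ennreal (exp (- s * \<epsilon>)) * ennreal (exp (s\<^sup>2 * C / 8))"
    using mcdiarmid_mgf_bound[OF fin s f_meas f_bounded f_diff] unfolding \<mu>_def C_def
    by (intro mult_left_mono) simp_all
  also have "\<dots> = ennreal (exp (- 2 * \<epsilon>\<^sup>2 / C))"
  proof -
    have "- s * \<epsilon> + s\<^sup>2 * C / 8 = - 2 * \<epsilon>\<^sup>2 / C" using C unfolding s_def C_def[symmetric]
      by (simp add: field_simps power2_eq_square)
    then show ?thesis by (simp add: ennreal_mult''[symmetric] exp_add[symmetric])
  qed
  finally show ?thesis unfolding \<mu>_def C_def by (simp add: PiJ.emeasure_eq_measure)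
qed

lemma (in product_prob_space) mcdiarmid_high_probability:
  fixes f :: "('i \<Rightarrow> 'a) \<Rightarrow> real"
  assumes fin: "finite J" and J: "J \<noteq> {}" and \<delta>: "\<delta> > 0" and C: "C > 0"
    and f_meas[measurable]: "f \<in> borel_measurable (PiM J M)"
    and f_bounded: "\<forall>x\<in>space (PiM J M). \<bar>f x\<bar> \<le> K"
    and f_diff: "\<forall>j\<in>J. \<forall>x\<in>space (PiM J M). \<forall>y\<in>space (M j). \<bar>f x - f (x(j:=y))\<bar> \<le> C"
  obtains E where "E \<in> sets (PiM J M)" and "measure (PiM J M) E \<ge> 1 - \<delta>"
    and "\<forall>x\<in>E. f x \<le> (\<integral>x. f x \<partial>PiM J M) + C * sqrt (real (card J) * ln (1 / \<delta>) / 2)"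
proof (cases "\<delta> < 1")
  case False
  then show ?thesis by (intro that[of "{}"]) auto
next
  case True
  interpret PiJ: prob_space "PiM J M" by (rule prob_space_PiM) (simp add: prob_space)
  define n where "n = real (card J)"
  have n: "n > 0" using fin J by (simp add: n_def card_gt_0_iff)
  define \<epsilon> where "\<epsilon> = C * sqrt (n * ln (1 / \<delta>) / 2)"
  have \<epsilon>: "\<epsilon> > 0" using C n \<delta> True by (simp add: \<epsilon>_def)
  define bad where "bad = {x\<in>space (PiM J M). \<epsilon> \<le> f x - (\<integral>x. f x \<partial>PiM J M)}"
  have bad_sets: "bad \<in> sets (PiM J M)" unfolding bad_def by measurable
  have "measure (PiM J M) bad \<le> exp (- 2 * \<epsilon>\<^sup>2 / (\<Sum>j\<in>J. C\<^sup>2))"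
    unfolding bad_def by (rule mcdiarmid_inequality[OF fin \<epsilon> _ f_meas f_bounded f_diff]) (use n C in \<open>simp add: n_def\<close>)
  also have "- 2 * \<epsilon>\<^sup>2 / (\<Sum>j\<in>J. C\<^sup>2) = ln \<delta>"
  proof -
    have "ln \<delta> < 0" using \<delta> True by simp
    then have "\<epsilon>\<^sup>2 = C\<^sup>2 * (- n * ln \<delta> / 2)" using n by (simp add: \<epsilon>_def power_mult_distrib ln_div)
    then show ?thesis using C n by (simp add: n_def[symmetric] field_simps power2_eq_square)
  qed
  finally have "measure (PiM J M) bad \<le> \<delta>" using \<delta> by simp
  then show ?thesis
    by (intro that[of "space (PiM J M) - bad"])
      (use bad_sets PiJ.prob_compl[OF bad_sets] in \<open>auto simp: bad_def \<epsilon>_def n_def\<close>)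
qed

section \<open>Rademacher averages\<close>

text \<open>\<open>rademacher_avg I F\<close> is the expectation of \<open>F \<sigma>\<close> over independent uniform signs
  \<open>\<sigma> i \<in> {-1, 1}\<close>, \<open>i \<in> I\<close>: \<open>S\<close> is the set of coordinates with sign \<open>+1\<close>, and \<open>\<sigma>\<close> vanishes outside \<open>I\<close>.\<close>

definition sign_vector :: "'i set \<Rightarrow> 'i set \<Rightarrow> 'i \<Rightarrow> real" where
  "sign_vector I S = (\<lambda>i. if i \<in> S then 1 else if i \<in> I then -1 else 0)"

definition rademacher_avg :: "'i set \<Rightarrow> (('i \<Rightarrow> real) \<Rightarrow> real) \<Rightarrow> real" where
  "rademacher_avg I F = (\<Sum>S\<in>Pow I. F (sign_vector I S)) / 2 ^ card I"

lemma abs_sign_vector_le: "\<bar>sign_vector I S i\<bar> \<le> 1"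
  by (simp add: sign_vector_def)

lemma rademacher_avg_insert:
  assumes "finite I" "k \<notin> I"
  shows "rademacher_avg (insert k I) F
    = (rademacher_avg I (\<lambda>\<sigma>. F (\<sigma>(k:=1))) + rademacher_avg I (\<lambda>\<sigma>. F (\<sigma>(k:=-1)))) / 2"
proof -
  have disj: "Pow I \<inter> insert k ` Pow I = {}" using assms by auto
  have inj: "inj_on (insert k) (Pow I)" using assms by (auto simp: inj_on_def)
  have plus: "sign_vector (insert k I) (insert k S) = (sign_vector I S)(k:=1)" if "S \<in> Pow I" for S
    using that assms by (auto simp: sign_vector_def fun_eq_iff)
  have minus: "sign_vector (insert k I) S = (sign_vector I S)(k:=-1)" if "S \<in> Pow I" for S
    using that assms by (auto simp: sign_vector_def fun_eq_iff)
  have "(\<Sum>S\<in>Pow (insert k I). F (sign_vector (insert k I) S))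
      = (\<Sum>S\<in>Pow I. F (sign_vector (insert k I) S)) + (\<Sum>S\<in>insert k ` Pow I. F (sign_vector (insert k I) S))"
    unfolding Pow_insert using assms disj by (intro sum.union_disjoint) auto
  also have "(\<Sum>S\<in>insert k ` Pow I. F (sign_vector (insert k I) S)) = (\<Sum>S\<in>Pow I. F ((sign_vector I S)(k:=1)))"
    by (subst sum.reindex[OF inj], rule sum.cong, simp_all add: plus del: fun_upd_apply)
  also have "(\<Sum>S\<in>Pow I. F (sign_vector (insert k I) S)) = (\<Sum>S\<in>Pow I. F ((sign_vector I S)(k:=-1)))"
    by (rule sum.cong, simp_all add: minus del: fun_upd_apply)
  finally show ?thesis using assms unfolding rademacher_avg_def
    by (simp add: field_simps del: fun_upd_apply)
qed

lemma rademacher_avg_cong: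
  "(\<And>S. S \<subseteq> I \<Longrightarrow> F (sign_vector I S) = G (sign_vector I S)) \<Longrightarrow> rademacher_avg I F = rademacher_avg I G"
  unfolding rademacher_avg_def by (intro arg_cong2[where f="(/)"] sum.cong) auto

lemma rademacher_avg_mono: "(\<And>\<sigma>. F \<sigma> \<le> G \<sigma>) \<Longrightarrow> rademacher_avg I F \<le> rademacher_avg I G"
  unfolding rademacher_avg_def by (intro divide_right_mono sum_mono) auto

lemma rademacher_avg_add: "rademacher_avg I (\<lambda>\<sigma>. F \<sigma> + G \<sigma>) = rademacher_avg I F + rademacher_avg I G"
  unfolding rademacher_avg_def by (simp add: sum.distrib add_divide_distrib)

lemma rademacher_avg_diff: "rademacher_avg I (\<lambda>\<sigma>. F \<sigma> - G \<sigma>) = rademacher_avg I F - rademacher_avg I G"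
  unfolding rademacher_avg_def by (simp add: sum_subtractf diff_divide_distrib)

lemma rademacher_avg_cmult: "rademacher_avg I (\<lambda>\<sigma>. c * F \<sigma>) = c * rademacher_avg I F"
  unfolding rademacher_avg_def by (simp add: sum_distrib_left)

lemma rademacher_avg_midpoint:
  "rademacher_avg I (\<lambda>\<sigma>. (F \<sigma> + G \<sigma>) / 2) = (rademacher_avg I F + rademacher_avg I G) / 2"
  unfolding rademacher_avg_def by (simp add: sum.distrib add_divide_distrib sum_divide_distrib mult.commute)

lemma rademacher_avg_sum: "rademacher_avg I (\<lambda>\<sigma>. \<Sum>k\<in>K. f k \<sigma>) = (\<Sum>k\<in>K. rademacher_avg I (f k))"
  unfolding rademacher_avg_def by (subst sum.swap) (simp add: sum_divide_distrib)

lemma rademacher_avg_const: "finite I \<Longrightarrow> rademacher_avg I (\<lambda>\<sigma>. c) = c"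
  unfolding rademacher_avg_def by (simp add: card_Pow)

lemma rademacher_avg_uminus_signs:
  assumes "finite I"
  shows "rademacher_avg I (\<lambda>\<sigma>. F (\<lambda>i. - \<sigma> i)) = rademacher_avg I F"
proof -
  have inj: "inj_on (\<lambda>S. I - S) (Pow I)" by (auto simp: inj_on_def)
  have surj: "(\<lambda>S. I - S) ` Pow I = Pow I" by (auto simp: image_iff intro!: exI[of _ "I - _"])
  have "(\<lambda>i. - sign_vector I S i) = sign_vector I (I - S)" if "S \<in> Pow I" for S
    using that by (auto simp: sign_vector_def fun_eq_iff)
  then have "(\<Sum>S\<in>Pow I. F (\<lambda>i. - sign_vector I S i)) = (\<Sum>S\<in>(\<lambda>S. I - S) ` Pow I. F (sign_vector I S))"
    by (subst sum.reindex[OF inj]) (auto intro: sum.cong)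
  then show ?thesis unfolding rademacher_avg_def surj by simp
qed

lemma rademacher_avg_abs_le:
  assumes "finite I" "\<And>S. S \<subseteq> I \<Longrightarrow> \<bar>F (sign_vector I S)\<bar> \<le> C"
  shows "\<bar>rademacher_avg I F\<bar> \<le> C"
proof -
  have "\<bar>\<Sum>S\<in>Pow I. F (sign_vector I S)\<bar> \<le> (\<Sum>S\<in>Pow I. C)"
    using assms(2) by (intro order.trans[OF sum_abs] sum_mono) auto
  then have "\<bar>\<Sum>S\<in>Pow I. F (sign_vector I S)\<bar> \<le> 2 ^ card I * C" using assms(1) by (simp add: card_Pow)
  then show ?thesis unfolding rademacher_avg_def by (simp add: divide_le_eq mult.commute)
qed

lemma borel_measurable_rademacher_avg:
  assumes "\<And>S. S \<subseteq> I \<Longrightarrow> (\<lambda>x. F (sign_vector I S) x) \<in> borel_measurable N"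
  shows "(\<lambda>x. rademacher_avg I (\<lambda>\<sigma>. F \<sigma> x)) \<in> borel_measurable N"
  unfolding rademacher_avg_def using assms by (intro borel_measurable_divide borel_measurable_sum) auto

lemma rademacher_avg_sign_products:
  assumes "finite I" "k \<in> I" "k' \<in> I"
  shows "rademacher_avg I (\<lambda>\<sigma>. \<sigma> k * \<sigma> k') = (if k = k' then 1 else 0)"
proof (cases "k = k'")
  case True
  have "rademacher_avg I (\<lambda>\<sigma>. \<sigma> k * \<sigma> k') = rademacher_avg I (\<lambda>\<sigma>. 1)"
    by (rule rademacher_avg_cong) (use True assms in \<open>auto simp: sign_vector_def\<close>)
  then show ?thesis using True assms by (simp add: rademacher_avg_const)
next
  case False
  define J where "J = I - {k}"
  have I: "I = insert k J" "k \<notin> J" "finite J" using assms by (auto simp: J_def)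
  have "rademacher_avg I (\<lambda>\<sigma>. \<sigma> k * \<sigma> k')
      = (rademacher_avg J (\<lambda>\<sigma>. \<sigma> k') + rademacher_avg J (\<lambda>\<sigma>. - \<sigma> k')) / 2"
    unfolding I(1) rademacher_avg_insert[OF I(3,2)] using False by simp
  also have "\<dots> = 0" using rademacher_avg_cmult[of J "-1" "\<lambda>\<sigma>. \<sigma> k'"] by simp
  finally show ?thesis using False by simp
qed

lemma rademacher_avg_norm_sum_squared:
  fixes y :: "'j \<Rightarrow> 'v::real_inner"
  assumes "finite I" "finite J" "inj_on e J" "e ` J \<subseteq> I"
  shows "rademacher_avg I (\<lambda>\<sigma>. (norm (\<Sum>j\<in>J. \<sigma> (e j) *\<^sub>R y j))\<^sup>2) = (\<Sum>j\<in>J. (norm (y j))\<^sup>2)"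
proof -
  have "(norm (\<Sum>j\<in>J. \<sigma> (e j) *\<^sub>R y j))\<^sup>2 = (\<Sum>j\<in>J. \<Sum>j'\<in>J. (y j \<bullet> y j') * (\<sigma> (e j) * \<sigma> (e j')))" for \<sigma>
    by (simp add: power2_norm_eq_inner inner_sum_left inner_sum_right sum_distrib_left mult_ac inner_commute)
  then have "rademacher_avg I (\<lambda>\<sigma>. (norm (\<Sum>j\<in>J. \<sigma> (e j) *\<^sub>R y j))\<^sup>2)
      = (\<Sum>j\<in>J. \<Sum>j'\<in>J. (y j \<bullet> y j') * rademacher_avg I (\<lambda>\<sigma>. \<sigma> (e j) * \<sigma> (e j')))"
    by (simp add: rademacher_avg_sum rademacher_avg_cmult)
  also have "\<dots> = (\<Sum>j\<in>J. \<Sum>j'\<in>J. (if j = j' then y j \<bullet> y j' else 0))"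
  proof (intro sum.cong refl)
    fix j j' assume "j \<in> J" "j' \<in> J"
    then have "e j \<in> I" "e j' \<in> I" "e j = e j' \<longleftrightarrow> j = j'" using assms by (auto simp: inj_on_eq_iff)
    then show "(y j \<bullet> y j') * rademacher_avg I (\<lambda>\<sigma>. \<sigma> (e j) * \<sigma> (e j'))
        = (if j = j' then y j \<bullet> y j' else 0)"
      by (simp add: rademacher_avg_sign_products[OF assms(1)])
  qed
  also have "\<dots> = (\<Sum>j\<in>J. (norm (y j))\<^sup>2)"
    using assms(2) by (simp add: power2_norm_eq_inner)
  finally show ?thesis .
qed

lemma rademacher_avg_sqrt_le:
  assumes "finite I" and X: "\<And>\<sigma>. X \<sigma> \<ge> 0"
  shows "rademacher_avg I (\<lambda>\<sigma>. sqrt (X \<sigma>)) \<le> sqrt (rademacher_avg I X)"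
proof (cases "rademacher_avg I X = 0")
  case True
  then have "(\<Sum>S\<in>Pow I. X (sign_vector I S)) = 0" unfolding rademacher_avg_def by simp
  then have "\<forall>S\<in>Pow I. X (sign_vector I S) = 0" using assms by (subst (asm) sum_nonneg_eq_0_iff) auto
  then have "rademacher_avg I (\<lambda>\<sigma>. sqrt (X \<sigma>)) = rademacher_avg I (\<lambda>\<sigma>. 0)"
    by (intro rademacher_avg_cong) auto
  then show ?thesis using assms True by (simp add: rademacher_avg_const)
next
  case False
  have X_avg: "rademacher_avg I X \<ge> 0"
    unfolding rademacher_avg_def using X by (intro divide_nonneg_pos sum_nonneg) auto
  define t where "t = sqrt (rademacher_avg I X)"
  have t: "t > 0" using X_avg False by (simp add: t_def)
  \<comment> \<open>the tangent line of \<open>sqrt\<close> at \<open>t\<^sup>2\<close>\<close>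
  have tangent: "sqrt x \<le> (x / t + t) / 2" if "x \<ge> 0" for x
  proof -
    have "0 \<le> (sqrt x - t)\<^sup>2" by simp
    then have "2 * t * sqrt x \<le> x + t\<^sup>2" using that by (simp add: power2_eq_square algebra_simps)
    then show ?thesis using t by (simp add: field_simps power2_eq_square)
  qed
  have "rademacher_avg I (\<lambda>\<sigma>. sqrt (X \<sigma>)) \<le> rademacher_avg I (\<lambda>\<sigma>. (X \<sigma> / t + t) / 2)"
    by (rule rademacher_avg_mono) (use tangent X in auto)
  also have "\<dots> = (rademacher_avg I X / t + t) / 2"
    using rademacher_avg_midpoint[of I "\<lambda>\<sigma>. X \<sigma> / t" "\<lambda>_. t"] rademacher_avg_cmult[of I "1/t" X] assms(1)
    by (simp add: rademacher_avg_const)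
  also have "\<dots> = t" using t X_avg unfolding t_def by (simp add: field_simps)
  finally show ?thesis unfolding t_def .
qed

lemma contraction_single_sign:
  fixes b g :: "'w \<Rightarrow> real" and \<phi> :: "real \<Rightarrow> real"
  assumes W: "W \<noteq> {}" and bB: "\<forall>w\<in>W. \<bar>b w\<bar> \<le> Bb" and gG: "\<forall>w\<in>W. \<bar>g w\<bar> \<le> G"
    and L: "L \<ge> 0" and lip: "\<forall>p q. \<bar>\<phi> p - \<phi> q\<bar> \<le> L * \<bar>p - q\<bar>"
  shows "(SUP w\<in>W. b w + \<phi> (g w)) + (SUP w\<in>W. b w - \<phi> (g w))
       \<le> (SUP w\<in>W. b w + L * g w) + (SUP w\<in>W. b w - L * g w)"
proof -
  have Lg: "\<bar>L * g w\<bar> \<le> L * G" if "w \<in> W" for w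
    using gG that L by (simp add: abs_mult mult_left_mono)
  have bdd1: "bdd_above ((\<lambda>w. b w + L * g w) ` W)"
    by (rule bdd_aboveI[where M="Bb + L * G"]) (use bB Lg in \<open>force simp: abs_le_iff\<close>)
  have bdd2: "bdd_above ((\<lambda>w. b w - L * g w) ` W)"
    by (rule bdd_aboveI[where M="Bb + L * G"]) (use bB Lg in \<open>force simp: abs_le_iff\<close>)
  define R where "R = (SUP w\<in>W. b w + L * g w) + (SUP w\<in>W. b w - L * g w)"
  have pair: "(b w1 + \<phi> (g w1)) + (b w2 - \<phi> (g w2)) \<le> R" if w: "w1 \<in> W" "w2 \<in> W" for w1 w2
  proof (cases "g w2 \<le> g w1")
    case True
    have "\<phi> (g w1) - \<phi> (g w2) \<le> L * (g w1 - g w2)" using lip[rule_format, of "g w1" "g w2"] True by simp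
    moreover have "b w1 + L * g w1 \<le> (SUP w\<in>W. b w + L * g w)" by (rule cSUP_upper[OF _ bdd1]) (use w in auto)
    moreover have "b w2 - L * g w2 \<le> (SUP w\<in>W. b w - L * g w)" by (rule cSUP_upper[OF _ bdd2]) (use w in auto)
    ultimately show ?thesis unfolding R_def by (simp add: algebra_simps)
  next
    case False
    have "\<phi> (g w1) - \<phi> (g w2) \<le> L * (g w2 - g w1)" using lip[rule_format, of "g w1" "g w2"] False by simp
    moreover have "b w2 + L * g w2 \<le> (SUP w\<in>W. b w + L * g w)" by (rule cSUP_upper[OF _ bdd1]) (use w in auto)
    moreover have "b w1 - L * g w1 \<le> (SUP w\<in>W. b w - L * g w)" by (rule cSUP_upper[OF _ bdd2]) (use w in auto)
    ultimately show ?thesis unfolding R_def by (simp add: algebra_simps)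
  qed
  have s1: "(SUP w\<in>W. b w + \<phi> (g w)) \<le> R - (b w2 - \<phi> (g w2))" if "w2 \<in> W" for w2
  proof (rule cSUP_least[OF W])
    fix x assume "x \<in> W"
    from pair[OF this that] show "b x + \<phi> (g x) \<le> R - (b w2 - \<phi> (g w2))" by linarith
  qed
  have "(SUP w\<in>W. b w - \<phi> (g w)) \<le> R - (SUP w\<in>W. b w + \<phi> (g w))"
  proof (rule cSUP_least[OF W])
    fix x assume "x \<in> W"
    from s1[OF this] show "b x - \<phi> (g x) \<le> R - (SUP w\<in>W. b w + \<phi> (g w))" by linarith
  qed
  then show ?thesis unfolding R_def by simp
qed


lemma sum_fun_upd_insert:
  fixes X :: "'i \<Rightarrow> real"
  assumes "finite I" "k \<notin> I"
  shows "(\<Sum>i\<in>insert k I. (\<sigma>(k:=v)) i * X i) = v * X k + (\<Sum>i\<in>I. \<sigma> i * X i)"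
proof -
  have "(\<Sum>i\<in>I. (\<sigma>(k:=v)) i * X i) = (\<Sum>i\<in>I. \<sigma> i * X i)"
    using assms by (intro sum.cong) auto
  then show ?thesis using assms by simp
qed

lemma abs_affine_signed_sum_le:
  fixes h \<sigma> :: "'i \<Rightarrow> real"
  assumes "\<bar>a\<bar> \<le> A" and h: "\<And>i. i \<in> I \<Longrightarrow> \<bar>h i\<bar> \<le> H" and L: "L \<ge> 0"
  shows "\<bar>a + (\<Sum>i\<in>I. \<sigma> i * (L * h i))\<bar> \<le> A + (\<Sum>i\<in>I. \<bar>\<sigma> i\<bar> * (L * H))"
proof -
  have "\<bar>\<Sum>i\<in>I. \<sigma> i * (L * h i)\<bar> \<le> (\<Sum>i\<in>I. \<bar>\<sigma> i * (L * h i)\<bar>)" by (rule sum_abs)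
  also have "\<dots> \<le> (\<Sum>i\<in>I. \<bar>\<sigma> i\<bar> * (L * H))"
    using h L by (intro sum_mono) (auto simp: abs_mult intro!: mult_left_mono)
  finally have "\<bar>\<Sum>i\<in>I. \<sigma> i * (L * h i)\<bar> \<le> (\<Sum>i\<in>I. \<bar>\<sigma> i\<bar> * (L * H))" .
  then show ?thesis using assms(1) by linarith
qed

lemma rademacher_contraction:
  fixes h :: "'w \<Rightarrow> 'i \<Rightarrow> real" and \<phi> :: "'i \<Rightarrow> real \<Rightarrow> real" and a :: "'w \<Rightarrow> real"
  assumes "finite I" and W: "W \<noteq> {}" and hH: "\<forall>w\<in>W. \<forall>i\<in>I. \<bar>h w i\<bar> \<le> H" and L: "L \<ge> 0"
    and lip: "\<forall>i\<in>I. \<forall>p q. \<bar>\<phi> i p - \<phi> i q\<bar> \<le> L * \<bar>p - q\<bar>"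
    and aA: "\<forall>w\<in>W. \<bar>a w\<bar> \<le> A"
  shows "rademacher_avg I (\<lambda>\<sigma>. SUP w\<in>W. a w + (\<Sum>i\<in>I. \<sigma> i * \<phi> i (h w i)))
       \<le> rademacher_avg I (\<lambda>\<sigma>. SUP w\<in>W. a w + (\<Sum>i\<in>I. \<sigma> i * (L * h w i)))"
  using assms(1) hH lip aA
proof (induction I arbitrary: a A rule: finite_induct)
  case empty
  then show ?case by simp
next
  case (insert k I a A)
  define \<Phi> where "\<Phi> w = \<phi> k (h w k)" for w
  define Pk where "Pk = \<bar>\<phi> k 0\<bar> + L * H"
  have \<Phi>B: "\<bar>\<Phi> w\<bar> \<le> Pk" if "w \<in> W" for w
  proof -
    have "\<bar>\<phi> k (h w k) - \<phi> k 0\<bar> \<le> L * \<bar>h w k\<bar>" using insert.prems(2)[rule_format, of k "h w k" 0] by simp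
    also have "\<dots> \<le> L * H" using insert.prems(1) that L by (intro mult_left_mono) auto
    finally show ?thesis unfolding \<Phi>_def Pk_def by linarith
  qed
  note sumk = sum_fun_upd_insert[OF insert.hyps]
  have hH': "\<forall>w\<in>W. \<forall>i\<in>I. \<bar>h w i\<bar> \<le> H" and lip': "\<forall>i\<in>I. \<forall>p q. \<bar>\<phi> i p - \<phi> i q\<bar> \<le> L * \<bar>p - q\<bar>"
    using insert.prems by auto
  have aP: "\<forall>w\<in>W. \<bar>a w + \<Phi> w\<bar> \<le> A + Pk" and aM: "\<forall>w\<in>W. \<bar>a w - \<Phi> w\<bar> \<le> A + Pk"
    using insert.prems(3) \<Phi>B by (force simp: abs_le_iff)+
  note IH1 = insert.IH[OF hH' lip' aP] and IH2 = insert.IH[OF hH' lip' aM]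
  define b where "b \<sigma> w = a w + (\<Sum>i\<in>I. \<sigma> i * (L * h w i))" for \<sigma> w
  have "rademacher_avg (insert k I) (\<lambda>\<sigma>. SUP w\<in>W. a w + (\<Sum>i\<in>insert k I. \<sigma> i * \<phi> i (h w i)))
      = (rademacher_avg I (\<lambda>\<sigma>. SUP w\<in>W. (a w + \<Phi> w) + (\<Sum>i\<in>I. \<sigma> i * \<phi> i (h w i)))
       + rademacher_avg I (\<lambda>\<sigma>. SUP w\<in>W. (a w - \<Phi> w) + (\<Sum>i\<in>I. \<sigma> i * \<phi> i (h w i)))) / 2"
    unfolding rademacher_avg_insert[OF insert.hyps] sumk \<Phi>_def by (simp add: algebra_simps)
  also have "\<dots> \<le> (rademacher_avg I (\<lambda>\<sigma>. SUP w\<in>W. (a w + \<Phi> w) + (\<Sum>i\<in>I. \<sigma> i * (L * h w i)))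
       + rademacher_avg I (\<lambda>\<sigma>. SUP w\<in>W. (a w - \<Phi> w) + (\<Sum>i\<in>I. \<sigma> i * (L * h w i)))) / 2"
    using IH1 IH2 by simp
  also have "\<dots> = rademacher_avg I (\<lambda>\<sigma>. ((SUP w\<in>W. b \<sigma> w + \<phi> k (h w k)) + (SUP w\<in>W. b \<sigma> w - \<phi> k (h w k))) / 2)"
    unfolding rademacher_avg_midpoint b_def \<Phi>_def
    by (simp add: algebra_simps)
  also have "\<dots> \<le> rademacher_avg I (\<lambda>\<sigma>. ((SUP w\<in>W. b \<sigma> w + L * h w k) + (SUP w\<in>W. b \<sigma> w - L * h w k)) / 2)"
  proof (rule rademacher_avg_mono)
    fix \<sigma> :: "'i \<Rightarrow> real"
    have bB: "\<forall>w\<in>W. \<bar>b \<sigma> w\<bar> \<le> A + (\<Sum>i\<in>I. \<bar>\<sigma> i\<bar> * (L * H))"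
      using insert.prems(3) hH' L unfolding b_def by (blast intro: abs_affine_signed_sum_le)
    have gG: "\<forall>w\<in>W. \<bar>h w k\<bar> \<le> H" using insert.prems(1) by auto
    have lk: "\<forall>p q. \<bar>\<phi> k p - \<phi> k q\<bar> \<le> L * \<bar>p - q\<bar>" using insert.prems(2) by auto
    show "((SUP w\<in>W. b \<sigma> w + \<phi> k (h w k)) + (SUP w\<in>W. b \<sigma> w - \<phi> k (h w k))) / 2
        \<le> ((SUP w\<in>W. b \<sigma> w + L * h w k) + (SUP w\<in>W. b \<sigma> w - L * h w k)) / 2"
      using contraction_single_sign[OF W bB gG L lk] by simp
  qed
  also have "\<dots> = rademacher_avg (insert k I) (\<lambda>\<sigma>. SUP w\<in>W. a w + (\<Sum>i\<in>insert k I. \<sigma> i * (L * h w i)))"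
    unfolding rademacher_avg_insert[OF insert.hyps] sumk b_def
    unfolding rademacher_avg_midpoint
    by (simp add: algebra_simps)
  finally show ?case .
qed

section \<open>Symmetrization\<close>

lemma abs_SUP_le:
  fixes f :: "'h \<Rightarrow> real"
  assumes "\<Theta> \<noteq> {}" "\<And>\<theta>. \<theta> \<in> \<Theta> \<Longrightarrow> \<bar>f \<theta>\<bar> \<le> C"
  shows "\<bar>SUP \<theta>\<in>\<Theta>. f \<theta>\<bar> \<le> C"
proof -
  have bdd: "bdd_above (f ` \<Theta>)" using assms(2) by (intro bdd_aboveI[where M=C]) (auto simp: abs_le_iff)
  obtain \<theta>0 where \<theta>0: "\<theta>0 \<in> \<Theta>" using assms(1) by auto
  have "f \<theta>0 \<le> (SUP \<theta>\<in>\<Theta>. f \<theta>)" by (rule cSUP_upper[OF \<theta>0 bdd])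
  moreover have "(SUP \<theta>\<in>\<Theta>. f \<theta>) \<le> C" using assms by (intro cSUP_least) (auto simp: abs_le_iff)
  ultimately show ?thesis using assms(2)[OF \<theta>0] by (auto simp: abs_le_iff)
qed

lemma abs_SUP_diff_le:
  fixes f h :: "'h \<Rightarrow> real"
  assumes ne: "\<Theta> \<noteq> {}" and f: "\<And>\<theta>. \<theta> \<in> \<Theta> \<Longrightarrow> \<bar>f \<theta>\<bar> \<le> C" and h: "\<And>\<theta>. \<theta> \<in> \<Theta> \<Longrightarrow> \<bar>h \<theta>\<bar> \<le> C"
    and diff: "\<And>\<theta>. \<theta> \<in> \<Theta> \<Longrightarrow> \<bar>f \<theta> - h \<theta>\<bar> \<le> c"
  shows "\<bar>(SUP \<theta>\<in>\<Theta>. f \<theta>) - (SUP \<theta>\<in>\<Theta>. h \<theta>)\<bar> \<le> c"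
proof -
  have bdd_f: "bdd_above (f ` \<Theta>)" using f by (intro bdd_aboveI[where M=C]) (auto simp: abs_le_iff)
  have bdd_h: "bdd_above (h ` \<Theta>)" using h by (intro bdd_aboveI[where M=C]) (auto simp: abs_le_iff)
  have "(SUP \<theta>\<in>\<Theta>. f \<theta>) \<le> (SUP \<theta>\<in>\<Theta>. h \<theta>) + c"
  proof (rule cSUP_least[OF ne])
    fix \<theta> assume "\<theta> \<in> \<Theta>"
    then show "f \<theta> \<le> (SUP \<theta>\<in>\<Theta>. h \<theta>) + c"
      using cSUP_upper[OF _ bdd_h] diff by (fastforce simp: abs_le_iff)
  qed
  moreover have "(SUP \<theta>\<in>\<Theta>. h \<theta>) \<le> (SUP \<theta>\<in>\<Theta>. f \<theta>) + c"
  proof (rule cSUP_least[OF ne])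
    fix \<theta> assume "\<theta> \<in> \<Theta>"
    then show "h \<theta> \<le> (SUP \<theta>\<in>\<Theta>. f \<theta>) + c"
      using cSUP_upper[OF _ bdd_f] diff by (fastforce simp: abs_le_iff)
  qed
  ultimately show ?thesis by (simp add: abs_le_iff)
qed

lemma borel_measurable_SUP_bounded:
  fixes f :: "'h \<Rightarrow> 'x \<Rightarrow> real"
  assumes "countable \<Theta>" "\<And>\<theta>. \<theta> \<in> \<Theta> \<Longrightarrow> f \<theta> \<in> borel_measurable N"
    and "\<And>\<theta> x. \<theta> \<in> \<Theta> \<Longrightarrow> x \<in> space N \<Longrightarrow> \<bar>f \<theta> x\<bar> \<le> C"
  shows "(\<lambda>x. SUP \<theta>\<in>\<Theta>. f \<theta> x) \<in> borel_measurable N"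
proof (rule borel_measurable_cSUP)
  fix x assume "x \<in> space N"
  then show "bdd_above ((\<lambda>\<theta>. f \<theta> x) ` \<Theta>)"
    using assms(3) by (intro bdd_aboveI[where M=C]) (auto simp: abs_le_iff)
qed (use assms in auto)

lemma sum_fun_upd_diff:
  fixes h :: "'i \<Rightarrow> 'a \<Rightarrow> 'b::ab_group_add"
  assumes "finite I" "i \<in> I"
  shows "(\<Sum>j\<in>I. h j (x j)) - (\<Sum>j\<in>I. h j ((x(i:=y)) j)) = h i (x i) - h i y"
proof -
  have "(\<Sum>j\<in>I - {i}. h j ((x(i:=y)) j)) = (\<Sum>j\<in>I - {i}. h j (x j))" by (intro sum.cong) auto
  then show ?thesis using assms by (simp add: sum.remove)
qed

lemma abs_sum_sign_vector_le:
  fixes f :: "'i \<Rightarrow> real"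
  assumes "\<And>i. \<bar>f i\<bar> \<le> B"
  shows "\<bar>\<Sum>i\<in>I. sign_vector I S i * f i\<bar> \<le> real (card I) * B"
proof -
  have "\<bar>\<Sum>i\<in>I. sign_vector I S i * f i\<bar> \<le> (\<Sum>i\<in>I. B)"
  proof (intro order.trans[OF sum_abs] sum_mono)
    fix i
    have "\<bar>sign_vector I S i\<bar> * \<bar>f i\<bar> \<le> 1 * B"
      by (rule mult_mono[OF abs_sign_vector_le assms]) (use assms[of i] in auto)
    then show "\<bar>sign_vector I S i * f i\<bar> \<le> B" by (simp add: abs_mult)
  qed
  then show ?thesis by simp
qed

definition swap_outside :: "'i set \<Rightarrow> 'i \<times> bool \<Rightarrow> 'i \<times> bool" where
  "swap_outside S j = (fst j, if fst j \<in> S then snd j else \<not> snd j)"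

context product_prob_space
begin

text \<open>A sample and an independent ghost sample are the \<open>True\<close> and \<open>False\<close> slices of one point
  of the doubled product \<open>PiM (I \<times> UNIV) (\<lambda>j. M (fst j))\<close>.\<close>

lemma product_prob_space_doubled: "product_prob_space (\<lambda>j::'i \<times> bool. M (fst j))"
  by (intro product_prob_spaceI) (simp add: prob_space)

lemma measurable_doubled_slice:
  assumes "(\<lambda>i. (i, b)) ` I \<subseteq> K"
  shows "(\<lambda>\<omega>. \<lambda>i\<in>I. \<omega> (i, b)) \<in> measurable (PiM K (\<lambda>j. M (fst j))) (PiM I M)"
proof (rule measurable_restrict)
  fix i assume "i \<in> I"
  then have "(i, b) \<in> K" using assms by auto
  from measurable_component_singleton[OF this, of "\<lambda>j. M (fst j)"]
  show "(\<lambda>\<omega>. \<omega> (i, b)) \<in> measurable (PiM K (\<lambda>j. M (fst j))) (M i)" by simp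
qed

lemma doubled_slice_in_space:
  assumes "\<omega> \<in> space (PiM K (\<lambda>j. M (fst j)))" "(\<lambda>i. (i, b)) ` I \<subseteq> K"
  shows "(\<lambda>i\<in>I. \<omega> (i, b)) \<in> space (PiM I M)"
  using assms by (auto simp: space_PiM PiE_def Pi_def)

lemma integral_doubled_slice:
  fixes F :: "('i \<Rightarrow> 'a) \<Rightarrow> real"
  assumes F: "F \<in> borel_measurable (PiM I M)" and b: "(\<lambda>i. (i, b)) ` I \<subseteq> K"
  shows "(\<integral>\<omega>. F (\<lambda>i\<in>I. \<omega> (i, b)) \<partial>PiM K (\<lambda>j. M (fst j))) = (\<integral>z. F z \<partial>PiM I M)"
proof -
  have "distr (PiM K (\<lambda>j. M (fst j))) (PiM I (\<lambda>i. M (fst (i, b)))) (\<lambda>\<omega>. \<lambda>i\<in>I. \<omega> (i, b))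
      = PiM I (\<lambda>i. M (fst (i, b)))"
    by (rule distr_PiM_reindex) (use b in \<open>auto simp: prob_space inj_on_def\<close>)
  then have "(\<integral>z. F z \<partial>PiM I M) = (\<integral>z. F z \<partial>distr (PiM K (\<lambda>j. M (fst j))) (PiM I M) (\<lambda>\<omega>. \<lambda>i\<in>I. \<omega> (i, b)))"
    by simp
  also have "\<dots> = (\<integral>\<omega>. F (\<lambda>i\<in>I. \<omega> (i, b)) \<partial>PiM K (\<lambda>j. M (fst j)))"
    by (rule integral_distr[OF measurable_doubled_slice[OF b] F])
  finally show ?thesis ..
qed

lemma measurable_doubled_pair:
  "(\<lambda>\<omega>. (\<lambda>i\<in>I. \<omega> (i, True), \<lambda>i\<in>I. \<omega> (i, False)))
    \<in> measurable (PiM (I \<times> UNIV) (\<lambda>j. M (fst j))) (PiM I M \<Otimes>\<^sub>M PiM I M)"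
  by (intro measurable_Pair measurable_doubled_slice) auto

lemma integral_doubled:
  fixes H :: "('i \<Rightarrow> 'a) \<Rightarrow> ('i \<Rightarrow> 'a) \<Rightarrow> real"
  assumes fin: "finite I" and H_meas: "case_prod H \<in> borel_measurable (PiM I M \<Otimes>\<^sub>M PiM I M)"
    and H_bounded: "\<And>z z'. \<bar>H z z'\<bar> \<le> C"
  shows "(\<integral>\<omega>. H (\<lambda>i\<in>I. \<omega> (i, True)) (\<lambda>i\<in>I. \<omega> (i, False)) \<partial>PiM (I \<times> UNIV) (\<lambda>j. M (fst j)))
       = (\<integral>z. (\<integral>z'. H z z' \<partial>PiM I M) \<partial>PiM I M)"
proof -
  interpret N: product_prob_space "\<lambda>j::'i \<times> bool. M (fst j)" "I \<times> UNIV"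
    by (rule product_prob_space_doubled)
  let ?N = "\<lambda>K. PiM K (\<lambda>j::'i \<times> bool. M (fst j))"
  define JT where "JT = I \<times> {True}"
  define JF where "JF = I \<times> {False}"
  have J: "I \<times> UNIV = JT \<union> JF" "JT \<inter> JF = {}" "finite JT" "finite JF"
    using fin by (auto simp: JT_def JF_def UNIV_bool)
  define f where "f \<omega> = H (\<lambda>i\<in>I. \<omega> (i, True)) (\<lambda>i\<in>I. \<omega> (i, False))" for \<omega>
  have f_meas: "f \<in> borel_measurable (?N (I \<times> UNIV))"
    using measurable_comp[OF measurable_doubled_pair H_meas] by (simp add: f_def[abs_def] comp_def)
  have f_int: "integrable (?N (I \<times> UNIV)) f"
    by (rule N.integrable_const_bound[where B=C]) (use f_meas H_bounded in \<open>auto simp: f_def\<close>)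
  have "(\<integral>\<omega>. f \<omega> \<partial>?N (I \<times> UNIV)) = (\<integral>x. (\<integral>y. f (merge JT JF (x, y)) \<partial>?N JF) \<partial>?N JT)"
    unfolding J(1) by (rule N.product_integral_fold[OF J(2-4) f_int[unfolded J(1)]])
  also have "\<dots> = (\<integral>x. (\<integral>y. H (\<lambda>i\<in>I. x (i, True)) (\<lambda>i\<in>I. y (i, False)) \<partial>?N JF) \<partial>?N JT)"
  proof (intro Bochner_Integration.integral_cong refl)
    fix x y :: "'i \<times> bool \<Rightarrow> 'a"
    have "(\<lambda>i\<in>I. merge JT JF (x, y) (i, True)) = (\<lambda>i\<in>I. x (i, True))"
      "(\<lambda>i\<in>I. merge JT JF (x, y) (i, False)) = (\<lambda>i\<in>I. y (i, False))"
      by (auto simp: JT_def JF_def merge_def fun_eq_iff)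
    then show "f (merge JT JF (x, y)) = H (\<lambda>i\<in>I. x (i, True)) (\<lambda>i\<in>I. y (i, False))"
      unfolding f_def by simp
  qed
  also have "\<dots> = (\<integral>x. (\<integral>z'. H (\<lambda>i\<in>I. x (i, True)) z' \<partial>PiM I M) \<partial>?N JT)"
  proof (rule Bochner_Integration.integral_cong[OF refl])
    fix x assume "x \<in> space (?N JT)"
    then have "(\<lambda>i\<in>I. x (i, True)) \<in> space (PiM I M)"
      by (rule doubled_slice_in_space) (auto simp: JT_def)
    from measurable_Pair2[OF H_meas this]
    show "(\<integral>y. H (\<lambda>i\<in>I. x (i, True)) (\<lambda>i\<in>I. y (i, False)) \<partial>?N JF) = (\<integral>z'. H (\<lambda>i\<in>I. x (i, True)) z' \<partial>PiM I M)"
      by (intro integral_doubled_slice) (auto simp: JF_def)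
  qed
  also have "\<dots> = (\<integral>z. (\<integral>z'. H z z' \<partial>PiM I M) \<partial>PiM I M)"
    by (rule integral_doubled_slice)
      (use H_meas in \<open>auto simp: JT_def intro!: P.borel_measurable_lebesgue_integral\<close>)
  finally show ?thesis unfolding f_def .
qed

lemma integral_doubled_swap:
  fixes F :: "('i \<times> bool \<Rightarrow> 'a) \<Rightarrow> real"
  assumes F_meas: "F \<in> borel_measurable (PiM (I \<times> UNIV) (\<lambda>j. M (fst j)))"
  shows "(\<integral>\<omega>. F (\<lambda>j\<in>I \<times> UNIV. \<omega> (swap_outside S j)) \<partial>PiM (I \<times> UNIV) (\<lambda>j. M (fst j)))
    = (\<integral>\<omega>. F \<omega> \<partial>PiM (I \<times> UNIV) (\<lambda>j. M (fst j)))"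
proof -
  let ?N = "PiM (I \<times> UNIV) (\<lambda>j::'i \<times> bool. M (fst j))"
  have fst_swap: "fst (swap_outside S j) = fst j" for j by (simp add: swap_outside_def)
  have "distr ?N (PiM (I \<times> UNIV) (\<lambda>j. M (fst (swap_outside S j)))) (\<lambda>\<omega>. \<lambda>j\<in>I \<times> UNIV. \<omega> (swap_outside S j))
      = PiM (I \<times> UNIV) (\<lambda>j. M (fst (swap_outside S j)))"
    by (rule distr_PiM_reindex) (auto simp: prob_space inj_on_def swap_outside_def split: if_splits)
  then have distr_swap: "distr ?N ?N (\<lambda>\<omega>. \<lambda>j\<in>I \<times> UNIV. \<omega> (swap_outside S j)) = ?N"
    by (simp add: fst_swap)
  have swap_meas: "(\<lambda>\<omega>. \<lambda>j\<in>I \<times> UNIV. \<omega> (swap_outside S j)) \<in> measurable ?N ?N"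
  proof (rule measurable_restrict)
    fix j :: "'i \<times> bool" assume "j \<in> I \<times> UNIV"
    then have "swap_outside S j \<in> I \<times> UNIV" by (auto simp: swap_outside_def)
    from measurable_component_singleton[OF this, of "\<lambda>j. M (fst j)"]
    show "(\<lambda>\<omega>. \<omega> (swap_outside S j)) \<in> measurable ?N (M (fst j))" by (simp add: fst_swap)
  qed
  show ?thesis
    using integral_distr[OF swap_meas F_meas] by (simp add: distr_swap)
qed

end

definition emp_sum :: "'i set \<Rightarrow> ('h \<Rightarrow> 'i \<Rightarrow> 'a \<Rightarrow> real) \<Rightarrow> ('i \<Rightarrow> 'a) \<Rightarrow> 'h \<Rightarrow> real" where
  "emp_sum I g z \<theta> = (\<Sum>i\<in>I. g \<theta> i (z i))"

definition sup_deviation ::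
  "'i set \<Rightarrow> ('i \<Rightarrow> 'a measure) \<Rightarrow> 'h set \<Rightarrow> ('h \<Rightarrow> 'i \<Rightarrow> 'a \<Rightarrow> real) \<Rightarrow> ('i \<Rightarrow> 'a) \<Rightarrow> real" where
  "sup_deviation I M \<Theta> g z = (SUP \<theta>\<in>\<Theta>. (\<integral>z'. emp_sum I g z' \<theta> \<partial>PiM I M) - emp_sum I g z \<theta>)"

text \<open>Without the factor \<open>1 / card I\<close>: \<open>card I\<close> times the usual empirical Rademacher complexity.\<close>

definition emp_rademacher :: "'i set \<Rightarrow> 'h set \<Rightarrow> ('h \<Rightarrow> 'i \<Rightarrow> 'a \<Rightarrow> real) \<Rightarrow> ('i \<Rightarrow> 'a) \<Rightarrow> real" where
  "emp_rademacher I \<Theta> g z = rademacher_avg I (\<lambda>\<sigma>. SUP \<theta>\<in>\<Theta>. \<Sum>i\<in>I. \<sigma> i * g \<theta> i (z i))"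

definition sup_signed_gap ::
  "'i set \<Rightarrow> 'h set \<Rightarrow> ('h \<Rightarrow> 'i \<Rightarrow> 'a \<Rightarrow> real) \<Rightarrow> ('i \<Rightarrow> real) \<Rightarrow> ('i \<Rightarrow> 'a) \<Rightarrow> ('i \<Rightarrow> 'a) \<Rightarrow> real" where
  "sup_signed_gap I \<Theta> g \<sigma> z z' = (SUP \<theta>\<in>\<Theta>. \<Sum>i\<in>I. \<sigma> i * (g \<theta> i (z' i) - g \<theta> i (z i)))"

lemma rademacher_avg_sup_signed_gap_le:
  fixes g :: "'h \<Rightarrow> 'i \<Rightarrow> 'a \<Rightarrow> real"
  assumes fin: "finite I" and ne: "\<Theta> \<noteq> {}" and g: "\<And>\<theta> i p. \<bar>g \<theta> i p\<bar> \<le> B"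
  shows "rademacher_avg I (\<lambda>\<sigma>. sup_signed_gap I \<Theta> g \<sigma> z z') \<le> emp_rademacher I \<Theta> g z' + emp_rademacher I \<Theta> g z"
proof -
  define R where "R y \<sigma> = (SUP \<theta>\<in>\<Theta>. \<Sum>i\<in>I. \<sigma> i * g \<theta> i (y i))" for y and \<sigma> :: "'i \<Rightarrow> real"
  have bdd: "bdd_above ((\<lambda>\<theta>. \<Sum>i\<in>I. \<sigma> i * g \<theta> i (y i)) ` \<Theta>)" for \<sigma> y
  proof (rule bdd_aboveI[where M="\<Sum>i\<in>I. \<bar>\<sigma> i\<bar> * B"], clarify)
    fix \<theta>
    have "(\<Sum>i\<in>I. \<sigma> i * g \<theta> i (y i)) \<le> (\<Sum>i\<in>I. \<bar>\<sigma> i * g \<theta> i (y i)\<bar>)" by (intro sum_mono) simp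
    also have "\<dots> \<le> (\<Sum>i\<in>I. \<bar>\<sigma> i\<bar> * B)" using g by (intro sum_mono) (simp add: abs_mult mult_left_mono)
    finally show "(\<Sum>i\<in>I. \<sigma> i * g \<theta> i (y i)) \<le> (\<Sum>i\<in>I. \<bar>\<sigma> i\<bar> * B)" .
  qed
  have "sup_signed_gap I \<Theta> g \<sigma> z z' \<le> R z' \<sigma> + R z (\<lambda>i. - \<sigma> i)" for \<sigma>
    unfolding sup_signed_gap_def
  proof (rule cSUP_least[OF ne])
    fix \<theta> assume \<theta>: "\<theta> \<in> \<Theta>"
    have "(\<Sum>i\<in>I. \<sigma> i * (g \<theta> i (z' i) - g \<theta> i (z i)))
        = (\<Sum>i\<in>I. \<sigma> i * g \<theta> i (z' i)) + (\<Sum>i\<in>I. - \<sigma> i * g \<theta> i (z i))"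
      by (simp add: algebra_simps sum_subtractf sum_negf)
    also have "\<dots> \<le> R z' \<sigma> + R z (\<lambda>i. - \<sigma> i)"
      unfolding R_def by (intro add_mono cSUP_upper[OF \<theta>] bdd)
    finally show "(\<Sum>i\<in>I. \<sigma> i * (g \<theta> i (z' i) - g \<theta> i (z i))) \<le> R z' \<sigma> + R z (\<lambda>i. - \<sigma> i)" .
  qed
  then have "rademacher_avg I (\<lambda>\<sigma>. sup_signed_gap I \<Theta> g \<sigma> z z')
      \<le> rademacher_avg I (\<lambda>\<sigma>. R z' \<sigma> + R z (\<lambda>i. - \<sigma> i))"
    by (rule rademacher_avg_mono)
  also have "\<dots> = rademacher_avg I (R z') + rademacher_avg I (R z)"
    by (simp add: rademacher_avg_add rademacher_avg_uminus_signs[OF fin, of "R z"])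
  finally show ?thesis unfolding emp_rademacher_def R_def .
qed

locale bounded_loss_class = product_prob_space M I
  for M :: "'i \<Rightarrow> 'a measure" and I :: "'i set" +
  fixes \<Theta> :: "'h set" and g :: "'h \<Rightarrow> 'i \<Rightarrow> 'a \<Rightarrow> real" and B :: real
  assumes finite_I: "finite I" and countable_\<Theta>: "countable \<Theta>" and \<Theta>_nonempty: "\<Theta> \<noteq> {}"
    and g_measurable: "\<And>\<theta> i. i \<in> I \<Longrightarrow> g \<theta> i \<in> borel_measurable (M i)"
    and g_nonneg: "\<And>\<theta> i p. 0 \<le> g \<theta> i p" and g_le: "\<And>\<theta> i p. g \<theta> i p \<le> B"
begin

lemma B_nonneg: "0 \<le> B"
  using g_nonneg g_le order_trans by blast

lemma abs_g_le: "\<bar>g \<theta> i p\<bar> \<le> B"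
  using g_nonneg g_le by simp

lemma abs_g_diff_le: "\<bar>g \<theta> i p - g \<theta> i q\<bar> \<le> B"
  using g_nonneg[of \<theta> i p] g_nonneg[of \<theta> i q] g_le[of \<theta> i p] g_le[of \<theta> i q] by (simp add: abs_le_iff)

lemma borel_measurable_g_coordinate:
  assumes "i \<in> I"
  shows "(\<lambda>z. g \<theta> i (z i)) \<in> borel_measurable (PiM I M)"
  using measurable_comp[OF measurable_component_singleton[OF assms, of M] g_measurable[OF assms]]
  by (simp add: comp_def)

lemma borel_measurable_emp_sum: "(\<lambda>z. emp_sum I g z \<theta>) \<in> borel_measurable (PiM I M)"
  unfolding emp_sum_def by (intro borel_measurable_sum borel_measurable_g_coordinate)

lemma emp_sum_nonneg: "0 \<le> emp_sum I g z \<theta>"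
  unfolding emp_sum_def by (intro sum_nonneg g_nonneg)

lemma emp_sum_le: "emp_sum I g z \<theta> \<le> real (card I) * B"
  unfolding emp_sum_def using sum_bounded_above[of I "\<lambda>i. g \<theta> i (z i)" B] g_le by simp

lemma integrable_emp_sum: "integrable (PiM I M) (\<lambda>z. emp_sum I g z \<theta>)"
  by (rule P.integrable_const_bound[where B="real (card I) * B"])
    (use emp_sum_nonneg emp_sum_le borel_measurable_emp_sum in auto)

lemma abs_expected_emp_sum_diff_le:
  "\<bar>(\<integral>z'. emp_sum I g z' \<theta> \<partial>PiM I M) - emp_sum I g z \<theta>\<bar> \<le> real (card I) * B"
proof -
  have "0 \<le> (\<integral>z'. emp_sum I g z' \<theta> \<partial>PiM I M)" by (intro integral_nonneg_AE AE_I2 emp_sum_nonneg)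
  moreover have "(\<integral>z'. emp_sum I g z' \<theta> \<partial>PiM I M) \<le> (\<integral>z'. real (card I) * B \<partial>PiM I M)"
    by (intro integral_mono integrable_emp_sum emp_sum_le) simp
  ultimately show ?thesis using emp_sum_nonneg[of z \<theta>] emp_sum_le[of z \<theta>] by (simp add: P.prob_space abs_le_iff)
qed

lemma abs_emp_sum_fun_upd_diff_le: "i \<in> I \<Longrightarrow> \<bar>emp_sum I g x \<theta> - emp_sum I g (x(i:=y)) \<theta>\<bar> \<le> B"
  unfolding emp_sum_def sum_fun_upd_diff[OF finite_I] by (rule abs_g_diff_le)

lemma borel_measurable_sup_deviation: "sup_deviation I M \<Theta> g \<in> borel_measurable (PiM I M)"
  unfolding sup_deviation_def[abs_def]
  by (rule borel_measurable_SUP_bounded[OF countable_\<Theta> _ abs_expected_emp_sum_diff_le])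
    (use borel_measurable_emp_sum in simp)

lemma abs_sup_deviation_le: "\<bar>sup_deviation I M \<Theta> g z\<bar> \<le> real (card I) * B"
  unfolding sup_deviation_def by (rule abs_SUP_le[OF \<Theta>_nonempty abs_expected_emp_sum_diff_le])

lemma sup_deviation_fun_upd_le:
  "i \<in> I \<Longrightarrow> \<bar>sup_deviation I M \<Theta> g x - sup_deviation I M \<Theta> g (x(i:=y))\<bar> \<le> B"
  unfolding sup_deviation_def
  by (rule abs_SUP_diff_le[OF \<Theta>_nonempty abs_expected_emp_sum_diff_le abs_expected_emp_sum_diff_le])
    (use abs_emp_sum_fun_upd_diff_le in \<open>simp add: abs_minus_commute\<close>)

lemma abs_signed_sum_le: "\<bar>\<Sum>i\<in>I. sign_vector I S i * g \<theta> i (z i)\<bar> \<le> real (card I) * B"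
  by (rule abs_sum_sign_vector_le[OF abs_g_le])

lemma borel_measurable_emp_rademacher: "emp_rademacher I \<Theta> g \<in> borel_measurable (PiM I M)"
  unfolding emp_rademacher_def[abs_def]
proof (intro borel_measurable_rademacher_avg borel_measurable_SUP_bounded[OF countable_\<Theta> _ abs_signed_sum_le])
  fix S \<theta>
  show "(\<lambda>z. \<Sum>i\<in>I. sign_vector I S i * g \<theta> i (z i)) \<in> borel_measurable (PiM I M)"
    by (intro borel_measurable_sum borel_measurable_times borel_measurable_const borel_measurable_g_coordinate)
qed

lemma abs_emp_rademacher_le: "\<bar>emp_rademacher I \<Theta> g z\<bar> \<le> real (card I) * B"
  unfolding emp_rademacher_def
  by (intro rademacher_avg_abs_le[OF finite_I] abs_SUP_le[OF \<Theta>_nonempty abs_signed_sum_le])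

lemma emp_rademacher_fun_upd_le:
  "i \<in> I \<Longrightarrow> \<bar>emp_rademacher I \<Theta> g x - emp_rademacher I \<Theta> g (x(i:=y))\<bar> \<le> B"
  unfolding emp_rademacher_def rademacher_avg_diff[symmetric]
proof (intro rademacher_avg_abs_le[OF finite_I] abs_SUP_diff_le[OF \<Theta>_nonempty abs_signed_sum_le abs_signed_sum_le])
  fix S \<theta> assume "i \<in> I"
  have "\<bar>sign_vector I S i * (g \<theta> i (x i) - g \<theta> i y)\<bar> \<le> 1 * B"
    unfolding abs_mult by (intro mult_mono abs_sign_vector_le abs_g_diff_le) simp_all
  then show "\<bar>(\<Sum>j\<in>I. sign_vector I S j * g \<theta> j (x j)) - (\<Sum>j\<in>I. sign_vector I S j * g \<theta> j ((x(i:=y)) j))\<bar> \<le> B"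
    unfolding sum_fun_upd_diff[OF finite_I \<open>i \<in> I\<close>, of "\<lambda>j p. sign_vector I S j * g \<theta> j p"]
    by (simp add: right_diff_distrib)
qed

lemma abs_signed_diff_sum_le:
  assumes "\<And>i. \<bar>\<sigma> i\<bar> \<le> 1"
  shows "\<bar>\<Sum>i\<in>I. \<sigma> i * (g \<theta> i (z' i) - g \<theta> i (z i))\<bar> \<le> real (card I) * B"
proof -
  have "\<bar>\<sigma> i * (g \<theta> i (z' i) - g \<theta> i (z i))\<bar> \<le> B" for i
    using mult_mono[OF assms abs_g_diff_le] by (simp add: abs_mult)
  then show ?thesis using sum_bounded_above[of I _ B] by (intro order.trans[OF sum_abs]) auto
qed

lemma abs_sup_signed_gap_le:
  assumes "\<And>i. \<bar>\<sigma> i\<bar> \<le> 1"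
  shows "\<bar>sup_signed_gap I \<Theta> g \<sigma> z z'\<bar> \<le> real (card I) * B"
  unfolding sup_signed_gap_def by (rule abs_SUP_le[OF \<Theta>_nonempty abs_signed_diff_sum_le[OF assms]])

lemma borel_measurable_sup_signed_gap:
  assumes "\<And>i. \<bar>\<sigma> i\<bar> \<le> 1"
  shows "case_prod (sup_signed_gap I \<Theta> g \<sigma>) \<in> borel_measurable (PiM I M \<Otimes>\<^sub>M PiM I M)"
  unfolding sup_signed_gap_def case_prod_beta
proof (rule borel_measurable_SUP_bounded[OF countable_\<Theta> _ abs_signed_diff_sum_le[OF assms]])
  fix \<theta>
  show "(\<lambda>x. \<Sum>i\<in>I. \<sigma> i * (g \<theta> i (snd x i) - g \<theta> i (fst x i))) \<in> borel_measurable (PiM I M \<Otimes>\<^sub>M PiM I M)"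
    using measurable_compose[OF measurable_snd borel_measurable_g_coordinate]
      measurable_compose[OF measurable_fst borel_measurable_g_coordinate]
    by (intro borel_measurable_sum borel_measurable_times borel_measurable_const borel_measurable_diff) auto
qed

lemma sup_deviation_le_ghost_gap:
  assumes z: "z \<in> space (PiM I M)"
  shows "sup_deviation I M \<Theta> g z \<le> (\<integral>z'. sup_signed_gap I \<Theta> g (\<lambda>_. 1) z z' \<partial>PiM I M)"
  unfolding sup_deviation_def
proof (rule cSUP_least[OF \<Theta>_nonempty])
  fix \<theta> assume \<theta>: "\<theta> \<in> \<Theta>"
  have gap_eq: "sup_signed_gap I \<Theta> g (\<lambda>_. 1) z z' = (SUP \<theta>\<in>\<Theta>. emp_sum I g z' \<theta> - emp_sum I g z \<theta>)" for z'
    unfolding sup_signed_gap_def emp_sum_def by (simp add: sum_subtractf)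
  have bdd: "bdd_above ((\<lambda>\<theta>. emp_sum I g z' \<theta> - emp_sum I g z \<theta>) ` \<Theta>)" for z'
  proof (rule bdd_aboveI[where M="real (card I) * B"], clarify)
    fix \<theta>
    show "emp_sum I g z' \<theta> - emp_sum I g z \<theta> \<le> real (card I) * B"
      using emp_sum_le[of z' \<theta>] emp_sum_nonneg[of z \<theta>] by linarith
  qed
  have gap_int: "integrable (PiM I M) (sup_signed_gap I \<Theta> g (\<lambda>_. 1) z)"
    using measurable_Pair2[OF borel_measurable_sup_signed_gap z] abs_sup_signed_gap_le
    by (intro P.integrable_const_bound[where B="real (card I) * B"]) auto
  have "(\<integral>z'. emp_sum I g z' \<theta> \<partial>PiM I M) - emp_sum I g z \<theta>
      = (\<integral>z'. emp_sum I g z' \<theta> - emp_sum I g z \<theta> \<partial>PiM I M)"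
    using integrable_emp_sum by (simp add: P.prob_space)
  also have "\<dots> \<le> (\<integral>z'. sup_signed_gap I \<Theta> g (\<lambda>_. 1) z z' \<partial>PiM I M)"
    unfolding gap_eq using integrable_emp_sum gap_int[unfolded gap_eq]
    by (intro integral_mono cSUP_upper[OF \<theta> bdd]) auto
  finally show "(\<integral>z'. emp_sum I g z' \<theta> \<partial>PiM I M) - emp_sum I g z \<theta>
      \<le> (\<integral>z'. sup_signed_gap I \<Theta> g (\<lambda>_. 1) z z' \<partial>PiM I M)" .
qed

lemma sup_signed_gap_swap_outside:
  "sup_signed_gap I \<Theta> g (\<lambda>_. 1)
      (\<lambda>i\<in>I. (\<lambda>j\<in>I \<times> UNIV. \<omega> (swap_outside S j)) (i, True))
      (\<lambda>i\<in>I. (\<lambda>j\<in>I \<times> UNIV. \<omega> (swap_outside S j)) (i, False))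
    = sup_signed_gap I \<Theta> g (sign_vector I S) (\<lambda>i\<in>I. \<omega> (i, True)) (\<lambda>i\<in>I. \<omega> (i, False))"
  unfolding sup_signed_gap_def
  by (intro SUP_cong sum.cong refl) (auto simp: swap_outside_def sign_vector_def)

lemma integrable_sup_signed_gap_doubled:
  assumes "\<And>i. \<bar>\<sigma> i\<bar> \<le> 1"
  shows "integrable (PiM (I \<times> UNIV) (\<lambda>j. M (fst j)))
    (\<lambda>\<omega>. sup_signed_gap I \<Theta> g \<sigma> (\<lambda>i\<in>I. \<omega> (i, True)) (\<lambda>i\<in>I. \<omega> (i, False)))"
proof -
  interpret N: product_prob_space "\<lambda>j::'i \<times> bool. M (fst j)" "I \<times> UNIV"
    by (rule product_prob_space_doubled)
  show ?thesis
    using measurable_comp[OF measurable_doubled_pair borel_measurable_sup_signed_gap[OF assms]]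
      abs_sup_signed_gap_le[OF assms]
    by (intro N.integrable_const_bound[where B="real (card I) * B"]) (auto simp: comp_def)
qed

lemma integral_sup_deviation_le_doubled:
  "(\<integral>z. sup_deviation I M \<Theta> g z \<partial>PiM I M)
    \<le> (\<integral>\<omega>. sup_signed_gap I \<Theta> g (\<lambda>_. 1) (\<lambda>i\<in>I. \<omega> (i, True)) (\<lambda>i\<in>I. \<omega> (i, False))
      \<partial>PiM (I \<times> UNIV) (\<lambda>j. M (fst j)))"
proof -
  have unit: "\<bar>(1::real)\<bar> \<le> 1" by simp
  have dev_int: "integrable (PiM I M) (sup_deviation I M \<Theta> g)"
    using borel_measurable_sup_deviation abs_sup_deviation_le
    by (intro P.integrable_const_bound[where B="real (card I) * B"]) auto
  have ghost_int: "integrable (PiM I M) (\<lambda>z. \<integral>z'. sup_signed_gap I \<Theta> g (\<lambda>_. 1) z z' \<partial>PiM I M)"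
  proof (rule P.integrable_const_bound[where B="real (card I) * B"])
    show "AE z in PiM I M. norm (\<integral>z'. sup_signed_gap I \<Theta> g (\<lambda>_. 1) z z' \<partial>PiM I M) \<le> real (card I) * B"
      using abs_sup_signed_gap_le unit by (intro AE_I2) (simp add: P.abs_integral_le_const)
  qed (rule P.borel_measurable_lebesgue_integral[OF borel_measurable_sup_signed_gap[OF unit]])
  have "(\<integral>z. sup_deviation I M \<Theta> g z \<partial>PiM I M)
      \<le> (\<integral>z. (\<integral>z'. sup_signed_gap I \<Theta> g (\<lambda>_. 1) z z' \<partial>PiM I M) \<partial>PiM I M)"
    by (intro integral_mono_AE dev_int ghost_int AE_I2 sup_deviation_le_ghost_gap)
  also have "\<dots> = (\<integral>\<omega>. sup_signed_gap I \<Theta> g (\<lambda>_. 1) (\<lambda>i\<in>I. \<omega> (i, True)) (\<lambda>i\<in>I. \<omega> (i, False))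
      \<partial>PiM (I \<times> UNIV) (\<lambda>j. M (fst j)))"
    by (rule integral_doubled[OF finite_I borel_measurable_sup_signed_gap abs_sup_signed_gap_le, symmetric])
      (use unit in auto)
  finally show ?thesis .
qed

text \<open>Swapping sample and ghost sample on the coordinates outside \<open>S\<close> preserves the doubled
  product measure and turns the gap into its signed version for the sign pattern of \<open>S\<close>.\<close>

lemma integral_doubled_gap_eq_rademacher_avg:
  "(\<integral>\<omega>. sup_signed_gap I \<Theta> g (\<lambda>_. 1) (\<lambda>i\<in>I. \<omega> (i, True)) (\<lambda>i\<in>I. \<omega> (i, False))
      \<partial>PiM (I \<times> UNIV) (\<lambda>j. M (fst j)))
    = rademacher_avg I (\<lambda>\<sigma>. \<integral>\<omega>. sup_signed_gap I \<Theta> g \<sigma> (\<lambda>i\<in>I. \<omega> (i, True)) (\<lambda>i\<in>I. \<omega> (i, False))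
      \<partial>PiM (I \<times> UNIV) (\<lambda>j. M (fst j)))"
proof -
  have unit: "\<bar>(1::real)\<bar> \<le> 1" by simp
  define F where "F \<sigma> = (\<integral>\<omega>. sup_signed_gap I \<Theta> g \<sigma> (\<lambda>i\<in>I. \<omega> (i, True)) (\<lambda>i\<in>I. \<omega> (i, False))
      \<partial>PiM (I \<times> UNIV) (\<lambda>j. M (fst j)))" for \<sigma>
  have "F (sign_vector I S) = F (\<lambda>_. 1)" for S
    using integral_doubled_swap[OF borel_measurable_integrable[OF integrable_sup_signed_gap_doubled[OF unit]], of S]
    unfolding F_def sup_signed_gap_swap_outside .
  then have "rademacher_avg I F = rademacher_avg I (\<lambda>_. F (\<lambda>_. 1))" by (intro rademacher_avg_cong)
  then show ?thesis unfolding F_def[symmetric] by (simp add: rademacher_avg_const[OF finite_I])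
qed

lemma integrable_emp_rademacher_doubled_slice:
  "integrable (PiM (I \<times> UNIV) (\<lambda>j. M (fst j))) (\<lambda>\<omega>. emp_rademacher I \<Theta> g (\<lambda>i\<in>I. \<omega> (i, b::bool)))"
proof -
  interpret N: product_prob_space "\<lambda>j::'i \<times> bool. M (fst j)" "I \<times> UNIV"
    by (rule product_prob_space_doubled)
  have "(\<lambda>i. (i, b)) ` I \<subseteq> I \<times> UNIV" by auto
  from measurable_comp[OF measurable_doubled_slice[OF this] borel_measurable_emp_rademacher]
  show ?thesis
    using abs_emp_rademacher_le by (intro N.integrable_const_bound[where B="real (card I) * B"]) (auto simp: comp_def)
qed

lemma integral_emp_rademacher_doubled:
  "(\<integral>\<omega>. emp_rademacher I \<Theta> g (\<lambda>i\<in>I. \<omega> (i, False)) + emp_rademacher I \<Theta> g (\<lambda>i\<in>I. \<omega> (i, True))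
      \<partial>PiM (I \<times> UNIV) (\<lambda>j. M (fst j)))
    = 2 * (\<integral>z. emp_rademacher I \<Theta> g z \<partial>PiM I M)"
proof -
  have "(\<lambda>i. (i, b)) ` I \<subseteq> I \<times> UNIV" for b :: bool by auto
  note integrals = integral_doubled_slice[OF borel_measurable_emp_rademacher this]
  show ?thesis
    using integrable_emp_rademacher_doubled_slice integrals[of False] integrals[of True] by simp
qed

theorem symmetrization:
  "(\<integral>z. sup_deviation I M \<Theta> g z \<partial>PiM I M) \<le> 2 * (\<integral>z. emp_rademacher I \<Theta> g z \<partial>PiM I M)"
proof -
  let ?N = "PiM (I \<times> UNIV) (\<lambda>j::'i \<times> bool. M (fst j))"
  define gap where "gap \<sigma> \<omega> = sup_signed_gap I \<Theta> g \<sigma> (\<lambda>i\<in>I. \<omega> (i, True)) (\<lambda>i\<in>I. \<omega> (i, False))" for \<sigma> \<omega>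
  have gap_int: "integrable ?N (gap (sign_vector I S))" for S
    unfolding gap_def by (intro integrable_sup_signed_gap_doubled abs_sign_vector_le)
  have "(\<integral>z. sup_deviation I M \<Theta> g z \<partial>PiM I M) \<le> rademacher_avg I (\<lambda>\<sigma>. \<integral>\<omega>. gap \<sigma> \<omega> \<partial>?N)"
    using integral_sup_deviation_le_doubled unfolding integral_doubled_gap_eq_rademacher_avg gap_def .
  also have "\<dots> = (\<integral>\<omega>. rademacher_avg I (\<lambda>\<sigma>. gap \<sigma> \<omega>) \<partial>?N)"
    unfolding rademacher_avg_def by (subst integral_divide_zero) (simp add: integral_sum gap_int)
  also have "\<dots> \<le> (\<integral>\<omega>. emp_rademacher I \<Theta> g (\<lambda>i\<in>I. \<omega> (i, False))
      + emp_rademacher I \<Theta> g (\<lambda>i\<in>I. \<omega> (i, True)) \<partial>?N)"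
  proof (rule integral_mono)
    show "integrable ?N (\<lambda>\<omega>. rademacher_avg I (\<lambda>\<sigma>. gap \<sigma> \<omega>))"
      unfolding rademacher_avg_def using gap_int by simp
    show "rademacher_avg I (\<lambda>\<sigma>. gap \<sigma> \<omega>) \<le> emp_rademacher I \<Theta> g (\<lambda>i\<in>I. \<omega> (i, False))
        + emp_rademacher I \<Theta> g (\<lambda>i\<in>I. \<omega> (i, True))" for \<omega>
      unfolding gap_def by (rule rademacher_avg_sup_signed_gap_le[OF finite_I \<Theta>_nonempty abs_g_le])
  qed (use integrable_emp_rademacher_doubled_slice in simp)
  also have "\<dots> = 2 * (\<integral>z. emp_rademacher I \<Theta> g z \<partial>PiM I M)"
    by (rule integral_emp_rademacher_doubled)
  finally show ?thesis .
qed

lemma sup_deviation_high_probability: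
  assumes \<delta>: "\<delta> > 0"
  obtains E where "E \<in> sets (PiM I M)" and "measure (PiM I M) E \<ge> 1 - \<delta>"
    and "\<forall>z\<in>E. sup_deviation I M \<Theta> g z
      \<le> 2 * emp_rademacher I \<Theta> g z + 3 * B * sqrt (real (card I) * ln (1 / \<delta>) / 2)"
proof (cases "B = 0 \<or> I = {}")
  case True
  then have "real (card I) * B = 0" by auto
  then have "\<forall>z. sup_deviation I M \<Theta> g z \<le> 2 * emp_rademacher I \<Theta> g z"
    using abs_sup_deviation_le abs_emp_rademacher_le by (metis abs_le_zero_iff mult_zero_right order_refl)
  moreover have "3 * B * sqrt (real (card I) * ln (1 / \<delta>) / 2) = 0" using True by auto
  ultimately show ?thesis
    using \<delta> by (intro that[of "space (PiM I M)"]) (auto simp: P.prob_space)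
next
  case False
  then have B: "B > 0" and I: "I \<noteq> {}" using B_nonneg by auto
  define \<Psi> where "\<Psi> z = sup_deviation I M \<Theta> g z - 2 * emp_rademacher I \<Theta> g z" for z
  have \<Psi>_meas: "\<Psi> \<in> borel_measurable (PiM I M)"
    unfolding \<Psi>_def[abs_def] using borel_measurable_sup_deviation borel_measurable_emp_rademacher by measurable
  have \<Psi>_bounded: "\<forall>z\<in>space (PiM I M). \<bar>\<Psi> z\<bar> \<le> 3 * (real (card I) * B)"
  proof
    fix z
    show "\<bar>\<Psi> z\<bar> \<le> 3 * (real (card I) * B)"
      using abs_sup_deviation_le[of z] abs_emp_rademacher_le[of z] by (simp add: \<Psi>_def abs_le_iff)
  qed
  have \<Psi>_diff: "\<forall>i\<in>I. \<forall>z\<in>space (PiM I M). \<forall>y\<in>space (M i). \<bar>\<Psi> z - \<Psi> (z(i:=y))\<bar> \<le> 3 * B"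
  proof (intro ballI)
    fix i z y assume "i \<in> I"
    from sup_deviation_fun_upd_le[OF this, of z y] emp_rademacher_fun_upd_le[OF this, of z y]
    show "\<bar>\<Psi> z - \<Psi> (z(i:=y))\<bar> \<le> 3 * B" by (simp add: \<Psi>_def abs_le_iff)
  qed
  have "(\<integral>z. \<Psi> z \<partial>PiM I M) \<le> 0"
  proof -
    have integrable: "integrable (PiM I M) (sup_deviation I M \<Theta> g)" "integrable (PiM I M) (emp_rademacher I \<Theta> g)"
      using borel_measurable_sup_deviation abs_sup_deviation_le borel_measurable_emp_rademacher abs_emp_rademacher_le
      by (auto intro!: P.integrable_const_bound[where B="real (card I) * B"])
    show ?thesis using symmetrization integrable by (simp add: \<Psi>_def)
  qed
  moreover obtain E where "E \<in> sets (PiM I M)" "measure (PiM I M) E \<ge> 1 - \<delta>"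
    "\<forall>z\<in>E. \<Psi> z \<le> (\<integral>z. \<Psi> z \<partial>PiM I M) + 3 * B * sqrt (real (card I) * ln (1 / \<delta>) / 2)"
    using mcdiarmid_high_probability[OF finite_I I \<delta> _ \<Psi>_meas \<Psi>_bounded \<Psi>_diff] B by auto
  ultimately show ?thesis by (intro that[of E]) (auto simp: \<Psi>_def)
qed

end

lemma deviation_le_sup_deviation_closure:
  fixes g :: "'h::{first_countable_topology, t2_space} \<Rightarrow> 'i \<Rightarrow> 'a \<Rightarrow> real"
  assumes "bounded_loss_class M I \<Theta> g B" and \<theta>: "\<theta> \<in> closure \<Theta>"
    and cont: "\<And>i p. isCont (\<lambda>\<theta>. g \<theta> i p) \<theta>"
  shows "(\<integral>z'. emp_sum I g z' \<theta> \<partial>PiM I M) - emp_sum I g z \<theta> \<le> sup_deviation I M \<Theta> g z"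
proof -
  interpret bounded_loss_class M I \<Theta> g B by fact
  obtain \<theta>k where \<theta>k: "\<And>k. \<theta>k k \<in> \<Theta>" and lim: "\<theta>k \<longlonglongrightarrow> \<theta>"
    using closure_sequential \<theta> by blast
  have emp_lim: "(\<lambda>k. emp_sum I g z' (\<theta>k k)) \<longlonglongrightarrow> emp_sum I g z' \<theta>" for z'
    unfolding emp_sum_def by (intro tendsto_sum isCont_tendsto_compose[OF cont lim])
  have exp_lim: "(\<lambda>k. \<integral>z'. emp_sum I g z' (\<theta>k k) \<partial>PiM I M) \<longlonglongrightarrow> (\<integral>z'. emp_sum I g z' \<theta> \<partial>PiM I M)"
    by (rule integral_dominated_convergence[where w="\<lambda>_. real (card I) * B"])
      (use emp_lim borel_measurable_emp_sum emp_sum_nonneg emp_sum_le in auto)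
  have bdd: "bdd_above ((\<lambda>\<theta>. (\<integral>z'. emp_sum I g z' \<theta> \<partial>PiM I M) - emp_sum I g z \<theta>) ` \<Theta>)"
    using abs_expected_emp_sum_diff_le by (intro bdd_aboveI[where M="real (card I) * B"]) (auto simp: abs_le_iff)
  have "(\<integral>z'. emp_sum I g z' (\<theta>k k) \<partial>PiM I M) - emp_sum I g z (\<theta>k k) \<le> sup_deviation I M \<Theta> g z" for k
    unfolding sup_deviation_def by (rule cSUP_upper[OF \<theta>k bdd])
  then show ?thesis by (intro LIMSEQ_le_const2[OF tendsto_diff[OF exp_lim emp_lim]]) auto
qed

section \<open>Multi-task linear predictors\<close>

lemma norm_orthogonal_transpose_mult:
  fixes U :: "real^'d^'d"
  assumes "transpose U ** U = mat 1"
  shows "norm (transpose U *v v) = norm v"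
proof -
  have U_orth: "U ** transpose U = mat 1" using assms orthogonal_matrix orthogonal_matrix_def by blast
  have "(transpose U *v v) \<bullet> (transpose U *v v) = v \<bullet> (U *v (transpose U *v v))"
    by (metis dot_lmul_matrix transpose_transpose vector_transpose_matrix)
  also have "\<dots> = v \<bullet> v" by (simp only: matrix_vector_mul_assoc U_orth matrix_vector_mul_lid)
  finally show ?thesis by (simp add: norm_eq_sqrt_inner)
qed

lemma norm21_nonneg: "0 \<le> norm21 a T"
  unfolding norm21_def by (intro sum_nonneg) (simp add: sum_nonneg)

lemma norm_le_norm21:
  fixes a :: "nat \<Rightarrow> real^'d"
  assumes "t < T"
  shows "norm (a t) \<le> norm21 a T"
proof -
  have "norm (a t) \<le> (\<Sum>j\<in>UNIV. \<bar>a t $ j\<bar>)" by (rule norm_le_l1_cart)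
  also have "\<dots> \<le> (\<Sum>j\<in>UNIV. sqrt (\<Sum>t<T. (a t $ j)\<^sup>2))"
  proof (rule sum_mono)
    fix j
    have "(a t $ j)\<^sup>2 \<le> (\<Sum>t<T. (a t $ j)\<^sup>2)" using assms by (intro member_le_sum) auto
    then show "\<bar>a t $ j\<bar> \<le> sqrt (\<Sum>t<T. (a t $ j)\<^sup>2)" using real_sqrt_le_mono by fastforce
  qed
  finally show ?thesis by (simp add: norm21_def)
qed

lemma sum_inner_le_norm21:
  fixes a u :: "nat \<Rightarrow> real^'d"
  shows "(\<Sum>t<T. a t \<bullet> u t) \<le> norm21 a T * sqrt (\<Sum>t<T. (norm (u t))\<^sup>2)"
proof -
  define S where "S = sqrt (\<Sum>t<T. (norm (u t))\<^sup>2)"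
  have "(\<Sum>t<T. a t \<bullet> u t) = (\<Sum>j\<in>UNIV. \<Sum>t<T. a t $ j * u t $ j)"
    by (simp add: inner_vec_def sum.swap[of _ "{..<T}"])
  also have "\<dots> \<le> (\<Sum>j\<in>UNIV. \<Sum>t<T. \<bar>a t $ j\<bar> * \<bar>u t $ j\<bar>)"
    by (intro sum_mono) (auto simp: abs_mult[symmetric])
  also have "\<dots> \<le> (\<Sum>j\<in>UNIV. L2_set (\<lambda>t. a t $ j) {..<T} * L2_set (\<lambda>t. u t $ j) {..<T})"
    by (intro sum_mono L2_set_mult_ineq)
  also have "\<dots> \<le> (\<Sum>j\<in>UNIV. L2_set (\<lambda>t. a t $ j) {..<T} * S)"
  proof (intro sum_mono mult_left_mono)
    fix j
    have "(u t $ j)\<^sup>2 \<le> (norm (u t))\<^sup>2" for t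
      using component_le_norm_cart[of "u t" j] by (metis power2_abs abs_ge_zero power_mono)
    then show "L2_set (\<lambda>t. u t $ j) {..<T} \<le> S"
      unfolding L2_set_def S_def by (intro real_sqrt_le_mono sum_mono) auto
  qed (simp add: L2_set_def sum_nonneg)
  also have "\<dots> = norm21 a T * S"
    by (simp add: norm21_def L2_set_def sum_distrib_right)
  finally show ?thesis unfolding S_def .
qed

lemma
  assumes "feasible T \<gamma> \<beta> a a0 U"
  shows feasible_norm21_le: "norm21 a T \<le> sqrt (real T / \<gamma>)"
    and feasible_norm_le: "norm a0 \<le> sqrt (1 / \<beta>)"
    and feasible_orthogonal: "transpose U ** U = mat 1"
  using assms norm21_nonneg[of a T] by (auto simp: feasible_def real_le_rsqrt)

lemma sample_idx_eq_Sigma: "sample_idx T m = Sigma {..<T} (\<lambda>t. {..<m t})"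
  by (auto simp: sample_idx_def)

lemma finite_sample_idx: "finite (sample_idx T m)"
  by (simp add: sample_idx_eq_Sigma)

lemma abs_pred_le:
  assumes "feasible T \<gamma> \<beta> a a0 U" "t < T"
  shows "\<bar>pred a a0 U t x\<bar> \<le> (sqrt (real T / \<gamma>) + sqrt (1 / \<beta>)) * norm x"
proof -
  have "\<bar>pred a a0 U t x\<bar> \<le> norm (a t + a0) * norm (transpose U *v x)"
    unfolding pred_def by (rule Cauchy_Schwarz_ineq2)
  also have "\<dots> = norm (a t + a0) * norm x"
    by (simp only: norm_orthogonal_transpose_mult[OF feasible_orthogonal[OF assms(1)]])
  also have "\<dots> \<le> (norm (a t) + norm a0) * norm x" by (intro mult_right_mono norm_triangle_ineq) auto
  also have "\<dots> \<le> (sqrt (real T / \<gamma>) + sqrt (1 / \<beta>)) * norm x"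
    using norm_le_norm21[OF assms(2), of a] feasible_norm21_le[OF assms(1)] feasible_norm_le[OF assms(1)]
    by (intro mult_right_mono) auto
  finally show ?thesis .
qed

lemma signed_pred_sum_le:
  fixes x :: "nat \<times> nat \<Rightarrow> real^'d"
  assumes feas: "feasible T \<gamma> \<beta> a a0 U"
  shows "(\<Sum>ti\<in>sample_idx T m. \<sigma> ti * pred a a0 U (fst ti) (x ti))
     \<le> sqrt (real T / \<gamma>) * sqrt (\<Sum>t<T. (norm (\<Sum>i<m t. \<sigma> (t,i) *\<^sub>R x (t,i)))\<^sup>2)
       + sqrt (1 / \<beta>) * norm (\<Sum>ti\<in>sample_idx T m. \<sigma> ti *\<^sub>R x ti)"
proof -
  define v where "v t = (\<Sum>i<m t. \<sigma> (t,i) *\<^sub>R x (t,i))" for t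
  define u where "u t = transpose U *v v t" for t
  note norm_U = norm_orthogonal_transpose_mult[OF feasible_orthogonal[OF feas]]
  have sum_v: "(\<Sum>t<T. v t) = (\<Sum>ti\<in>sample_idx T m. \<sigma> ti *\<^sub>R x ti)"
    unfolding v_def sample_idx_eq_Sigma by (simp add: sum.Sigma split_def)
  have "(\<Sum>ti\<in>sample_idx T m. \<sigma> ti * pred a a0 U (fst ti) (x ti))
      = (\<Sum>t<T. \<Sum>i<m t. \<sigma> (t,i) * ((a t + a0) \<bullet> (transpose U *v x (t,i))))"
    unfolding sample_idx_eq_Sigma by (simp add: sum.Sigma pred_def split_def)
  also have "\<dots> = (\<Sum>t<T. (a t + a0) \<bullet> u t)"
    unfolding u_def v_def linear_sum[OF matrix_vector_mul_linear] linear_scale[OF matrix_vector_mul_linear]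
    by (simp only: inner_sum_right inner_scaleR_right)
  also have "\<dots> = (\<Sum>t<T. a t \<bullet> u t) + a0 \<bullet> (transpose U *v (\<Sum>t<T. v t))"
    unfolding u_def linear_sum[OF matrix_vector_mul_linear]
    by (simp add: inner_add_left sum.distrib inner_sum_right)
  also have "\<dots> \<le> norm21 a T * sqrt (\<Sum>t<T. (norm (v t))\<^sup>2) + norm a0 * norm (\<Sum>t<T. v t)"
  proof (rule add_mono)
    show "(\<Sum>t<T. a t \<bullet> u t) \<le> norm21 a T * sqrt (\<Sum>t<T. (norm (v t))\<^sup>2)"
      using sum_inner_le_norm21[of a u T] by (simp only: u_def norm_U)
    show "a0 \<bullet> (transpose U *v (\<Sum>t<T. v t)) \<le> norm a0 * norm (\<Sum>t<T. v t)"
      using norm_cauchy_schwarz[of a0 "transpose U *v (\<Sum>t<T. v t)"] by (simp only: norm_U)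
  qed
  also have "\<dots> \<le> sqrt (real T / \<gamma>) * sqrt (\<Sum>t<T. (norm (v t))\<^sup>2) + sqrt (1 / \<beta>) * norm (\<Sum>t<T. v t)"
    using feasible_norm21_le[OF feas] feasible_norm_le[OF feas]
    by (intro add_mono mult_right_mono) (simp_all add: sum_nonneg)
  finally show ?thesis unfolding sum_v[symmetric] v_def .
qed

lemma rademacher_avg_signed_pred_bound_le:
  fixes x :: "nat \<times> nat \<Rightarrow> real^'d"
  assumes \<gamma>: "\<gamma> > 0" and \<beta>: "\<beta> > 0"
  shows "rademacher_avg (sample_idx T m) (\<lambda>\<sigma>. sqrt (real T / \<gamma>) * sqrt (\<Sum>t<T. (norm (\<Sum>i<m t. \<sigma> (t,i) *\<^sub>R x (t,i)))\<^sup>2)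
       + sqrt (1 / \<beta>) * norm (\<Sum>ti\<in>sample_idx T m. \<sigma> ti *\<^sub>R x ti))
     \<le> (sqrt (real T / \<gamma>) + sqrt (1 / \<beta>)) * sqrt (\<Sum>ti\<in>sample_idx T m. (norm (x ti))\<^sup>2)"
proof -
  let ?I = "sample_idx T m"
  note fin = finite_sample_idx[of T m]
  have per_task: "rademacher_avg ?I (\<lambda>\<sigma>. sqrt (\<Sum>t<T. (norm (\<Sum>i<m t. \<sigma> (t,i) *\<^sub>R x (t,i)))\<^sup>2))
      \<le> sqrt (\<Sum>ti\<in>?I. (norm (x ti))\<^sup>2)"
  proof -
    have "rademacher_avg ?I (\<lambda>\<sigma>. (norm (\<Sum>i<m t. \<sigma> (t,i) *\<^sub>R x (t,i)))\<^sup>2) = (\<Sum>i<m t. (norm (x (t,i)))\<^sup>2)"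
      if "t < T" for t
      using rademacher_avg_norm_sum_squared[OF fin, of "{..<m t}" "Pair t" "\<lambda>i. x (t,i)"] that
      by (auto simp: inj_on_def sample_idx_def)
    then have "rademacher_avg ?I (\<lambda>\<sigma>. \<Sum>t<T. (norm (\<Sum>i<m t. \<sigma> (t,i) *\<^sub>R x (t,i)))\<^sup>2)
        = (\<Sum>ti\<in>?I. (norm (x ti))\<^sup>2)"
      unfolding rademacher_avg_sum sample_idx_eq_Sigma by (simp add: sum.Sigma split_def)
    then show ?thesis
      using rademacher_avg_sqrt_le[OF fin, of "\<lambda>\<sigma>. \<Sum>t<T. (norm (\<Sum>i<m t. \<sigma> (t,i) *\<^sub>R x (t,i)))\<^sup>2"]
      by (simp add: sum_nonneg)
  qed
  have pooled: "rademacher_avg ?I (\<lambda>\<sigma>. norm (\<Sum>ti\<in>?I. \<sigma> ti *\<^sub>R x ti)) \<le> sqrt (\<Sum>ti\<in>?I. (norm (x ti))\<^sup>2)"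
    using rademacher_avg_sqrt_le[OF fin, of "\<lambda>\<sigma>. (norm (\<Sum>ti\<in>?I. \<sigma> ti *\<^sub>R x ti))\<^sup>2"]
      rademacher_avg_norm_sum_squared[OF fin fin, of "\<lambda>j. j" x]
    by simp
  have "rademacher_avg ?I (\<lambda>\<sigma>. sqrt (real T / \<gamma>) * sqrt (\<Sum>t<T. (norm (\<Sum>i<m t. \<sigma> (t,i) *\<^sub>R x (t,i)))\<^sup>2)
       + sqrt (1 / \<beta>) * norm (\<Sum>ti\<in>?I. \<sigma> ti *\<^sub>R x ti))
      = sqrt (real T / \<gamma>) * rademacher_avg ?I (\<lambda>\<sigma>. sqrt (\<Sum>t<T. (norm (\<Sum>i<m t. \<sigma> (t,i) *\<^sub>R x (t,i)))\<^sup>2))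
        + sqrt (1 / \<beta>) * rademacher_avg ?I (\<lambda>\<sigma>. norm (\<Sum>ti\<in>?I. \<sigma> ti *\<^sub>R x ti))"
    by (simp add: rademacher_avg_add rademacher_avg_cmult)
  also have "\<dots> \<le> (sqrt (real T / \<gamma>) + sqrt (1 / \<beta>)) * sqrt (\<Sum>ti\<in>?I. (norm (x ti))\<^sup>2)"
  proof -
    have "0 \<le> sqrt (real T / \<gamma>)" "0 \<le> sqrt (1 / \<beta>)" using \<gamma> \<beta> by simp_all
    from add_mono[OF mult_left_mono[OF per_task this(1)] mult_left_mono[OF pooled this(2)]]
    show ?thesis by (simp add: distrib_right)
  qed
  finally show ?thesis .
qed

definition feasible_set :: "nat \<Rightarrow> real \<Rightarrow> real \<Rightarrow> ((nat \<Rightarrow> real^'d) \<times> (real^'d) \<times> (real^'d^'d)) set" where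
  "feasible_set T \<gamma> \<beta> = {(a, a0, U). feasible T \<gamma> \<beta> a a0 U}"

definition pred_loss ::
  "(real \<Rightarrow> real \<Rightarrow> real) \<Rightarrow> (nat \<Rightarrow> real^'d) \<times> (real^'d) \<times> (real^'d^'d) \<Rightarrow> nat \<times> nat \<Rightarrow> (real^'d) \<times> real \<Rightarrow> real"
  where "pred_loss l \<theta> ti p = l (snd p) (pred (fst \<theta>) (fst (snd \<theta>)) (snd (snd \<theta>)) (fst ti) (fst p))"

lemma emp_loss_eq_emp_sum:
  "emp_loss l T m z a a0 U = emp_sum (sample_idx T m) (pred_loss l) z (a, a0, U)"
  unfolding emp_loss_def emp_sum_def pred_loss_def sample_idx_eq_Sigma by (simp add: sum.Sigma split_def)

text \<open>Admissibility is only tested on linear functions, but the coordinate functionals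
  \<open>x \<mapsto> p * x $ j\<close> already realise every pair of predictions \<open>p, q\<close>.\<close>

lemma admissible_linear_lipschitz:
  fixes l :: "real \<Rightarrow> real \<Rightarrow> real"
  assumes "admissible l c {h :: real^'d \<Rightarrow> real. linear h}"
  shows "c \<ge> 0" "\<bar>l y p - l y q\<bar> \<le> c * \<bar>p - q\<bar>"
proof -
  show "c \<ge> 0" using assms by (simp add: admissible_def)
  fix j :: 'd
  have lin: "linear (\<lambda>x::real^'d. r * x $ j)" for r
    by (rule linearI) (simp_all add: algebra_simps)
  have adm: "linear h \<Longrightarrow> linear h' \<Longrightarrow> \<bar>l y (h x) - l y (h' x)\<bar> \<le> c * \<bar>h x - h' x\<bar>"
    for h h' :: "real^'d \<Rightarrow> real" and x
    using assms unfolding admissible_def by blast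
  have "\<bar>l y ((\<lambda>x::real^'d. p * x $ j) (axis j 1)) - l y ((\<lambda>x::real^'d. q * x $ j) (axis j 1))\<bar>
      \<le> c * \<bar>(\<lambda>x::real^'d. p * x $ j) (axis j 1) - (\<lambda>x::real^'d. q * x $ j) (axis j 1)\<bar>"
    by (rule adm[OF lin lin])
  then show "\<bar>l y p - l y q\<bar> \<le> c * \<bar>p - q\<bar>" by (simp add: axis_def)
qed

lemma pred_eq_sum: "pred a a0 U t x = (\<Sum>j\<in>UNIV. (a t + a0) $ j * (\<Sum>i\<in>UNIV. U $ i $ j * x $ i))"
  by (simp add: pred_def inner_vec_def matrix_vector_mult_def transpose_def)

lemma tendsto_pred_param:
  fixes \<theta>k :: "'k \<Rightarrow> (nat \<Rightarrow> real^'d) \<times> (real^'d) \<times> (real^'d^'d)"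
  assumes "(\<theta>k \<longlongrightarrow> \<theta>) F"
  shows "((\<lambda>k. pred (fst (\<theta>k k)) (fst (snd (\<theta>k k))) (snd (snd (\<theta>k k))) t x)
    \<longlongrightarrow> pred (fst \<theta>) (fst (snd \<theta>)) (snd (snd \<theta>)) t x) F"
proof -
  have "((\<lambda>k. fst (\<theta>k k) t) \<longlongrightarrow> fst \<theta> t) F"
    by (rule continuous_on_tendsto_compose[OF continuous_on_product_coordinates tendsto_fst[OF assms]]) auto
  then show ?thesis unfolding pred_eq_sum using assms by (intro tendsto_intros)
qed

lemma lipschitz_tendsto:
  fixes f :: "real \<Rightarrow> real"
  assumes lip: "\<And>p q. \<bar>f p - f q\<bar> \<le> c * \<bar>p - q\<bar>" and X: "(X \<longlongrightarrow> x) F"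
  shows "((\<lambda>k. f (X k)) \<longlongrightarrow> f x) F"
proof -
  have "((\<lambda>k. c * \<bar>X k - x\<bar>) \<longlongrightarrow> 0) F"
    using X by (intro tendsto_mult_right_zero tendsto_rabs_zero) (simp add: LIM_zero_iff)
  then have "((\<lambda>k. f (X k) - f x) \<longlongrightarrow> 0) F"
    by (rule Lim_null_comparison[rotated]) (use lip in \<open>auto intro: always_eventually\<close>)
  then show ?thesis by (simp add: LIM_zero_iff)
qed

lemma isCont_pred_loss:
  assumes "\<And>y p q. \<bar>l y p - l y q\<bar> \<le> c * \<bar>p - q\<bar>"
  shows "isCont (\<lambda>\<theta>. pred_loss l \<theta> ti p) \<theta>"
  unfolding isCont_def pred_loss_def
  by (intro lipschitz_tendsto[OF assms] tendsto_pred_param tendsto_ident_at)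

lemma borel_measurable_pred_loss:
  fixes l :: "real \<Rightarrow> real \<Rightarrow> real"
  assumes "case_prod l \<in> borel_measurable borel" and "sets N = sets (borel :: ((real^'d) \<times> real) measure)"
  shows "pred_loss l \<theta> ti \<in> borel_measurable N"
proof -
  have "(\<lambda>p::(real^'d) \<times> real. (snd p, pred a a0 U t (fst p))) \<in> borel_measurable borel" for a a0 U t
    unfolding pred_eq_sum by (intro borel_measurable_continuous_onI continuous_intros)
  from measurable_comp[OF this assms(1)]
  show ?thesis unfolding pred_loss_def measurable_cong_sets[OF assms(2) refl] by (simp add: comp_def)
qed

lemma emp_rademacher_pred_loss_le:
  fixes z :: "nat \<times> nat \<Rightarrow> (real^'d) \<times> real"
  assumes ne: "\<Theta> \<noteq> {}" and feas: "\<Theta> \<subseteq> feasible_set T \<gamma> \<beta>"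
    and \<gamma>: "\<gamma> > 0" and \<beta>: "\<beta> > 0" and c: "c \<ge> 0"
    and lip: "\<And>y p q. \<bar>l y p - l y q\<bar> \<le> c * \<bar>p - q\<bar>"
  shows "emp_rademacher (sample_idx T m) \<Theta> (pred_loss l) z
    \<le> c * ((sqrt (real T / \<gamma>) + sqrt (1 / \<beta>)) * sqrt (\<Sum>ti\<in>sample_idx T m. (norm (fst (z ti)))\<^sup>2))"
proof -
  let ?I = "sample_idx T m"
  define K where "K = sqrt (real T / \<gamma>) + sqrt (1 / \<beta>)"
  define h where "h \<theta> ti = pred (fst \<theta>) (fst (snd \<theta>)) (snd (snd \<theta>)) (fst ti) (fst (z ti))"
    for \<theta> :: "(nat \<Rightarrow> real^'d) \<times> (real^'d) \<times> (real^'d^'d)" and ti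
  define bound where "bound \<sigma> = sqrt (real T / \<gamma>) * sqrt (\<Sum>t<T. (norm (\<Sum>i<m t. \<sigma> (t,i) *\<^sub>R fst (z (t,i))))\<^sup>2)
       + sqrt (1 / \<beta>) * norm (\<Sum>ti\<in>?I. \<sigma> ti *\<^sub>R fst (z ti))" for \<sigma> :: "nat \<times> nat \<Rightarrow> real"
  have feasible: "feasible T \<gamma> \<beta> (fst \<theta>) (fst (snd \<theta>)) (snd (snd \<theta>))" if "\<theta> \<in> \<Theta>" for \<theta>
    using feas that by (auto simp: feasible_set_def)
  have h_bounded: "\<forall>\<theta>\<in>\<Theta>. \<forall>ti\<in>?I. \<bar>h \<theta> ti\<bar> \<le> K * (\<Sum>tj\<in>?I. norm (fst (z tj)))"
  proof (intro ballI)
    fix \<theta> ti assume \<theta>: "\<theta> \<in> \<Theta>" and ti: "ti \<in> ?I"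
    then have "\<bar>h \<theta> ti\<bar> \<le> K * norm (fst (z ti))"
      unfolding h_def K_def using abs_pred_le[OF feasible[OF \<theta>]] by (auto simp: sample_idx_def)
    also have "\<dots> \<le> K * (\<Sum>tj\<in>?I. norm (fst (z tj)))"
      using ti \<gamma> \<beta> by (intro mult_left_mono member_le_sum finite_sample_idx) (auto simp: K_def)
    finally show "\<bar>h \<theta> ti\<bar> \<le> K * (\<Sum>tj\<in>?I. norm (fst (z tj)))" .
  qed
  have "emp_rademacher ?I \<Theta> (pred_loss l) z
      = rademacher_avg ?I (\<lambda>\<sigma>. SUP \<theta>\<in>\<Theta>. 0 + (\<Sum>ti\<in>?I. \<sigma> ti * l (snd (z ti)) (h \<theta> ti)))"
    unfolding emp_rademacher_def h_def pred_loss_def by simp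
  also have "\<dots> \<le> rademacher_avg ?I (\<lambda>\<sigma>. SUP \<theta>\<in>\<Theta>. 0 + (\<Sum>ti\<in>?I. \<sigma> ti * (c * h \<theta> ti)))"
    using rademacher_contraction[OF finite_sample_idx ne h_bounded c, where \<phi>="\<lambda>ti. l (snd (z ti))" and a="\<lambda>_. 0" and A=0]
    lip by auto
  also have "\<dots> \<le> rademacher_avg ?I (\<lambda>\<sigma>. c * bound \<sigma>)"
  proof (rule rademacher_avg_mono, rule cSUP_least[OF ne])
    fix \<sigma> \<theta> assume \<theta>: "\<theta> \<in> \<Theta>"
    have "(\<Sum>ti\<in>?I. \<sigma> ti * (c * h \<theta> ti)) = c * (\<Sum>ti\<in>?I. \<sigma> ti * h \<theta> ti)"
      by (simp add: sum_distrib_left algebra_simps)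
    also have "\<dots> \<le> c * bound \<sigma>"
      unfolding bound_def h_def by (intro mult_left_mono signed_pred_sum_le[OF feasible[OF \<theta>]] c)
    finally show "0 + (\<Sum>ti\<in>?I. \<sigma> ti * (c * h \<theta> ti)) \<le> c * bound \<sigma>" by simp
  qed
  also have "\<dots> = c * rademacher_avg ?I bound" by (rule rademacher_avg_cmult)
  also have "\<dots> \<le> c * (K * sqrt (\<Sum>ti\<in>?I. (norm (fst (z ti)))\<^sup>2))"
    unfolding bound_def K_def by (intro mult_left_mono c rademacher_avg_signed_pred_bound_le[OF \<gamma> \<beta>])
  finally show ?thesis unfolding K_def .
qed

lemma feasible_set_nonempty: "\<gamma> > 0 \<Longrightarrow> \<beta> > 0 \<Longrightarrow> ((\<lambda>_. 0), 0, mat 1) \<in> feasible_set T \<gamma> \<beta>"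
  by (simp add: feasible_set_def feasible_def norm21_def transpose_mat)

text \<open>A product probability space needs a probability measure at every index, also for the
  tasks \<open>t \<ge> T\<close> that carry no samples.\<close>

definition task_measure ::
  "(nat \<Rightarrow> ((real^'d) \<times> real) measure) \<Rightarrow> nat \<Rightarrow> nat \<times> nat \<Rightarrow> ((real^'d) \<times> real) measure" where
  "task_measure D T ti = (if fst ti < T then D (fst ti) else return borel (0, 0))"

lemma sample_measure_eq_task_measure: "sample_measure D T m = PiM (sample_idx T m) (task_measure D T)"
  unfolding sample_measure_def by (rule PiM_cong) (auto simp: task_measure_def sample_idx_def)

lemma bounded_loss_class_pred_loss:
  fixes D :: "nat \<Rightarrow> ((real^'d) \<times> real) measure" and l :: "real \<Rightarrow> real \<Rightarrow> real"
  assumes D_prob: "\<forall>t<T. prob_space (D t)"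
    and D_sets: "\<forall>t<T. sets (D t) = sets (borel :: ((real^'d) \<times> real) measure)"
    and l_meas: "case_prod l \<in> borel_measurable borel"
    and l_bounded: "\<forall>y p. 0 \<le> l y p \<and> l y p \<le> B"
    and \<Theta>: "countable \<Theta>" "\<Theta> \<noteq> {}"
  shows "bounded_loss_class (task_measure D T) (sample_idx T m) \<Theta> (pred_loss l) B"
proof (intro bounded_loss_class.intro bounded_loss_class_axioms.intro product_prob_spaceI)
  show "prob_space (task_measure D T ti)" for ti
    using D_prob by (simp add: task_measure_def prob_space_return)
  show "pred_loss l \<theta> ti \<in> borel_measurable (task_measure D T ti)" for \<theta> ti
    using D_sets by (intro borel_measurable_pred_loss[OF l_meas]) (simp add: task_measure_def)
  show "0 \<le> pred_loss l \<theta> ti p" "pred_loss l \<theta> ti p \<le> B" for \<theta> ti p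
    using l_bounded by (simp_all add: pred_loss_def)
qed (use \<Theta> finite_sample_idx in auto)

lemma feasible_deviation_high_probability:
  fixes D :: "nat \<Rightarrow> ((real^'d) \<times> real) measure" and l :: "real \<Rightarrow> real \<Rightarrow> real"
  assumes \<gamma>: "\<gamma> > 0" and \<beta>: "\<beta> > 0" and \<delta>: "\<delta> > 0"
    and D_prob: "\<forall>t<T. prob_space (D t)"
    and D_sets: "\<forall>t<T. sets (D t) = sets (borel :: ((real^'d) \<times> real) measure)"
    and l_meas: "case_prod l \<in> borel_measurable borel"
    and l_bounded: "\<forall>y p. 0 \<le> l y p \<and> l y p \<le> B"
    and l_adm: "admissible l c {h :: real^'d \<Rightarrow> real. linear h}"
  obtains E where "E \<in> sets (sample_measure D T m)" and "measure (sample_measure D T m) E \<ge> 1 - \<delta>"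
    and "\<And>z a a0 U. z \<in> E \<Longrightarrow> feasible T \<gamma> \<beta> a a0 U \<Longrightarrow>
      (\<integral>z'. emp_loss l T m z' a a0 U \<partial>sample_measure D T m) - emp_loss l T m z a a0 U
      \<le> 2 * c * (sqrt (real T / \<gamma>) + sqrt (1 / \<beta>)) * sqrt (\<Sum>ti\<in>sample_idx T m. (norm (fst (z ti)))\<^sup>2)
        + 3 * B * sqrt (real (card (sample_idx T m)) * ln (1 / \<delta>) / 2)"
proof -
  let ?I = "sample_idx T m" and ?M = "task_measure D T"
  obtain \<Theta> :: "((nat \<Rightarrow> real^'d) \<times> (real^'d) \<times> (real^'d^'d)) set"
    where \<Theta>: "countable \<Theta>" "\<Theta> \<subseteq> feasible_set T \<gamma> \<beta>" "feasible_set T \<gamma> \<beta> \<subseteq> closure \<Theta>"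
    using separable by blast
  then have \<Theta>_nonempty: "\<Theta> \<noteq> {}" using feasible_set_nonempty[OF \<gamma> \<beta>, of T] by auto
  note lip = admissible_linear_lipschitz[OF l_adm]
  note loss_class = bounded_loss_class_pred_loss[OF D_prob D_sets l_meas l_bounded \<Theta>(1) \<Theta>_nonempty, of m]
  interpret bounded_loss_class ?M ?I \<Theta> "pred_loss l" B by (rule loss_class)
  obtain E where E: "E \<in> sets (PiM ?I ?M)" "measure (PiM ?I ?M) E \<ge> 1 - \<delta>"
    "\<forall>z\<in>E. sup_deviation ?I ?M \<Theta> (pred_loss l) z
      \<le> 2 * emp_rademacher ?I \<Theta> (pred_loss l) z + 3 * B * sqrt (real (card ?I) * ln (1 / \<delta>) / 2)"
    by (rule sup_deviation_high_probability[OF \<delta>])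
  show ?thesis
  proof (rule that[of E])
    show "E \<in> sets (sample_measure D T m)" "measure (sample_measure D T m) E \<ge> 1 - \<delta>"
      using E by (simp_all add: sample_measure_eq_task_measure)
    fix z and a :: "nat \<Rightarrow> real^'d" and a0 U assume z: "z \<in> E" and "feasible T \<gamma> \<beta> a a0 U"
    then have closure: "(a, a0, U) \<in> closure \<Theta>" using \<Theta> by (auto simp: feasible_set_def)
    have "(\<integral>z'. emp_loss l T m z' a a0 U \<partial>sample_measure D T m) - emp_loss l T m z a a0 U
        = (\<integral>z'. emp_sum ?I (pred_loss l) z' (a, a0, U) \<partial>PiM ?I ?M) - emp_sum ?I (pred_loss l) z (a, a0, U)"
      by (simp add: sample_measure_eq_task_measure emp_loss_eq_emp_sum)
    also have "\<dots> \<le> sup_deviation ?I ?M \<Theta> (pred_loss l) z"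
      by (rule deviation_le_sup_deviation_closure[OF loss_class closure isCont_pred_loss[OF lip(2)]])
    also have "\<dots> \<le> 2 * emp_rademacher ?I \<Theta> (pred_loss l) z + 3 * B * sqrt (real (card ?I) * ln (1 / \<delta>) / 2)"
      using E z by blast
    also have "\<dots> \<le> 2 * c * (sqrt (real T / \<gamma>) + sqrt (1 / \<beta>)) * sqrt (\<Sum>ti\<in>?I. (norm (fst (z ti)))\<^sup>2)
        + 3 * B * sqrt (real (card ?I) * ln (1 / \<delta>) / 2)"
      using emp_rademacher_pred_loss_le[OF \<Theta>_nonempty \<Theta>(2) \<gamma> \<beta> lip] by simp
    finally show "(\<integral>z'. emp_loss l T m z' a a0 U \<partial>sample_measure D T m) - emp_loss l T m z a a0 U
      \<le> 2 * c * (sqrt (real T / \<gamma>) + sqrt (1 / \<beta>)) * sqrt (\<Sum>ti\<in>?I. (norm (fst (z ti)))\<^sup>2)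
        + 3 * B * sqrt (real (card ?I) * ln (1 / \<delta>) / 2)" .
  qed
qed

lemma card_sample_idx: "real (card (sample_idx T m)) = (\<Sum>t<T. real (m t))"
  by (simp add: sample_idx_eq_Sigma card_SigmaI)

lemma sum_S_X_eq:
  assumes "\<forall>t<T. m t \<ge> 1"
  shows "(\<Sum>t<T. real (m t) * S_X m z t) = (\<Sum>ti\<in>sample_idx T m. (norm (fst (z ti)))\<^sup>2)"
proof -
  have "(\<Sum>t<T. real (m t) * S_X m z t) = (\<Sum>t<T. \<Sum>i<m t. (norm (fst (z (t,i))))\<^sup>2)"
    using assms by (intro sum.cong) (auto simp: S_X_def)
  then show ?thesis unfolding sample_idx_eq_Sigma by (simp add: sum.Sigma split_def)
qed

lemma expected_emp_loss:
  fixes D :: "nat \<Rightarrow> ((real^'d) \<times> real) measure" and l :: "real \<Rightarrow> real \<Rightarrow> real"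
  assumes D_prob: "\<forall>t<T. prob_space (D t)"
    and D_sets: "\<forall>t<T. sets (D t) = sets (borel :: ((real^'d) \<times> real) measure)"
    and l_meas: "case_prod l \<in> borel_measurable borel"
    and l_bounded: "\<forall>y p. 0 \<le> l y p \<and> l y p \<le> B"
  shows "(\<integral>z'. emp_loss l T m z' a a0 U \<partial>sample_measure D T m)
    = (\<Sum>t<T. real (m t) * (\<integral>p. l (snd p) (pred a a0 U t (fst p)) \<partial>D t))"
proof -
  let ?I = "sample_idx T m" and ?N = "\<lambda>ti::nat \<times> nat. D (fst ti)" and ?\<theta> = "(a, a0, U)"
  have N_prob: "prob_space (?N ti)" if "ti \<in> ?I" for ti
    using D_prob that by (auto simp: sample_idx_def)
  interpret S: prob_space "PiM ?I ?N" by (rule prob_space_PiM[OF N_prob])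
  have loss_meas: "pred_loss l ?\<theta> ti \<in> borel_measurable (?N ti)" if "ti \<in> ?I" for ti
    using D_sets that by (intro borel_measurable_pred_loss[OF l_meas]) (auto simp: sample_idx_def)
  have component: "(\<integral>z. pred_loss l ?\<theta> ti (z ti) \<partial>PiM ?I ?N) = (\<integral>p. pred_loss l ?\<theta> ti p \<partial>?N ti)"
    if ti: "ti \<in> ?I" for ti
  proof -
    have "distr (PiM ?I ?N) (?N ti) (\<lambda>\<omega>. \<omega> ti) = ?N ti"
      by (rule distr_PiM_component[OF N_prob ti])
    then have "(\<integral>p. pred_loss l ?\<theta> ti p \<partial>?N ti) = (\<integral>p. pred_loss l ?\<theta> ti p \<partial>distr (PiM ?I ?N) (?N ti) (\<lambda>\<omega>. \<omega> ti))"
      by simp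
    also have "\<dots> = (\<integral>z. pred_loss l ?\<theta> ti (z ti) \<partial>PiM ?I ?N)"
      by (rule integral_distr[OF measurable_component_singleton[OF ti, of ?N] loss_meas[OF ti]])
    finally show ?thesis ..
  qed
  have integrable: "integrable (PiM ?I ?N) (\<lambda>z. pred_loss l ?\<theta> ti (z ti))" if ti: "ti \<in> ?I" for ti
    using measurable_comp[OF measurable_component_singleton[OF ti, of ?N] loss_meas[OF ti]] l_bounded
    by (intro S.integrable_const_bound[where B=B]) (auto simp: comp_def pred_loss_def)
  have "(\<integral>z'. emp_loss l T m z' a a0 U \<partial>sample_measure D T m)
      = (\<Sum>ti\<in>?I. \<integral>z. pred_loss l ?\<theta> ti (z ti) \<partial>PiM ?I ?N)"
    unfolding sample_measure_def emp_loss_eq_emp_sum emp_sum_def by (rule Bochner_Integration.integral_sum[OF integrable])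
  also have "\<dots> = (\<Sum>ti\<in>?I. \<integral>p. pred_loss l ?\<theta> ti p \<partial>?N ti)"
    by (rule sum.cong) (auto simp: component)
  also have "\<dots> = (\<Sum>t<T. \<Sum>i<m t. \<integral>p. pred_loss l ?\<theta> (t, i) p \<partial>D t)"
    unfolding sample_idx_eq_Sigma by (subst sum.Sigma) (auto simp: split_def)
  also have "\<dots> = (\<Sum>t<T. real (m t) * (\<integral>p. l (snd p) (pred a a0 U t (fst p)) \<partial>D t))"
    by (simp add: pred_loss_def)
  finally show ?thesis .
qed

lemma AE_sample_norm_le:
  fixes D :: "nat \<Rightarrow> ((real^'d) \<times> real) measure" and m :: "nat \<Rightarrow> nat" and r :: real
  assumes D_prob: "\<forall>t<T. prob_space (D t)"
    and D_sets: "\<forall>t<T. sets (D t) = sets (borel :: ((real^'d) \<times> real) measure)"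
    and r: "\<forall>t<T. AE p in D t. norm (fst p) \<le> r"
  defines "G \<equiv> {z \<in> space (sample_measure D T m). \<forall>ti\<in>sample_idx T m. norm (fst (z ti)) \<le> r}"
  shows "G \<in> sets (sample_measure D T m)" and "AE z in sample_measure D T m. z \<in> G"
proof -
  let ?I = "sample_idx T m" and ?N = "\<lambda>ti::nat \<times> nat. D (fst ti)"
  have task: "fst ti < T" if "ti \<in> ?I" for ti using that by (auto simp: sample_idx_def)
  have N_prob: "prob_space (?N ti)" if "ti \<in> ?I" for ti using D_prob task[OF that] by auto
  show "G \<in> sets (sample_measure D T m)"
    unfolding G_def
  proof (rule sets.sets_Collect_finite_All[OF _ finite_sample_idx])
    fix ti assume ti: "ti \<in> ?I"
    have "(\<lambda>p::(real^'d) \<times> real. norm (fst p)) \<in> borel_measurable (D (fst ti))"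
      unfolding measurable_cong_sets[OF D_sets[rule_format, OF task[OF ti]] refl]
      by (intro borel_measurable_continuous_onI continuous_intros)
    from measurable_comp[OF measurable_component_singleton[OF ti, of ?N] this]
    show "{z \<in> space (sample_measure D T m). norm (fst (z ti)) \<le> r} \<in> sets (sample_measure D T m)"
      unfolding sample_measure_def comp_def by measurable
  qed
  have "AE z in sample_measure D T m. \<forall>ti\<in>?I. norm (fst (z ti)) \<le> r"
  proof (rule AE_finite_allI[OF finite_sample_idx])
    fix ti assume ti: "ti \<in> ?I"
    show "AE z in sample_measure D T m. norm (fst (z ti)) \<le> r"
      unfolding sample_measure_def
      by (rule AE_PiM_component[OF N_prob ti, where P="\<lambda>p. norm (fst p) \<le> r"]) (use r task[OF ti] in auto)
  qed
  then show "AE z in sample_measure D T m. z \<in> G"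
    unfolding G_def using AE_space by eventually_elim auto
qed

lemma averaged_bound_arith:
  fixes T mm :: nat and \<gamma> \<beta> c B r L S \<Delta> :: real
  assumes T: "T \<ge> 1" and mm: "mm \<ge> 1" and \<gamma>: "\<gamma> > 0" and \<beta>: "\<beta> > 0" and c: "c \<ge> 0"
    and r: "r \<ge> 0" and S: "S \<le> real mm * real T * r\<^sup>2"
    and \<Delta>: "\<Delta> \<le> 2 * c * (sqrt (real T / \<gamma>) + sqrt (1 / \<beta>)) * sqrt S + 3 * B * sqrt (real mm * real T * L / 2)"
  shows "\<Delta> / (real T * real mm) \<le> 2 * c * r / sqrt (\<gamma> * real mm) + 2 * c * r / sqrt (\<beta> * real mm * real T)
    + 3 * B * sqrt (L / (2 * real mm * real T))"
proof -
  define n where "n = sqrt (real mm) * sqrt (real T)"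
  have n: "n > 0" "n\<^sup>2 = real T * real mm" using T mm by (auto simp: n_def power_mult_distrib)
  have "sqrt S \<le> n * r"
    using real_sqrt_le_mono[OF S] r by (simp add: n_def real_sqrt_mult)
  then have "2 * c * (sqrt (real T / \<gamma>) + sqrt (1 / \<beta>)) * sqrt S
      \<le> 2 * c * (sqrt (real T / \<gamma>) + sqrt (1 / \<beta>)) * (n * r)"
    using c \<gamma> \<beta> by (intro mult_left_mono) auto
  moreover have "sqrt (real mm * real T * L / 2) = n * sqrt (L / 2)"
    unfolding n_def real_sqrt_mult[symmetric] by (simp add: mult_ac)
  ultimately have "\<Delta> \<le> 2 * c * (sqrt (real T / \<gamma>) + sqrt (1 / \<beta>)) * (n * r) + 3 * B * (n * sqrt (L / 2))"
    using \<Delta> by simp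
  then have "\<Delta> / n\<^sup>2 \<le> (2 * c * (sqrt (real T / \<gamma>) + sqrt (1 / \<beta>)) * (n * r) + 3 * B * (n * sqrt (L / 2))) / n\<^sup>2"
    using n by (intro divide_right_mono) auto
  also have "\<dots> = 2 * c * r * (sqrt (real T / \<gamma>) / n) + 2 * c * r * (sqrt (1 / \<beta>) / n) + 3 * B * (sqrt (L / 2) / n)"
    using n(1) by (simp add: field_simps power2_eq_square)
  also have "\<dots> = 2 * c * r / sqrt (\<gamma> * real mm) + 2 * c * r / sqrt (\<beta> * real mm * real T)
      + 3 * B * sqrt (L / (2 * real mm * real T))"
    using T by (simp add: n_def real_sqrt_mult real_sqrt_divide field_simps)
  finally show ?thesis using n(2) by simp
qed

lemma optimal_deviation_bound:
  fixes D :: "nat \<Rightarrow> ((real^'d) \<times> real) measure" and l :: "real \<Rightarrow> real \<Rightarrow> real"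
  assumes m_pos: "\<forall>t<T. m t \<ge> 1"
    and \<gamma>: "\<gamma> > 0" and \<beta>: "\<beta> > 0" and \<delta>: "\<delta> > 0"
    and D_prob: "\<forall>t<T. prob_space (D t)"
    and D_sets: "\<forall>t<T. sets (D t) = sets (borel :: ((real^'d) \<times> real) measure)"
    and l_meas: "case_prod l \<in> borel_measurable borel"
    and l_bounded: "\<forall>y p. 0 \<le> l y p \<and> l y p \<le> B"
    and l_adm: "admissible l c {h :: real^'d \<Rightarrow> real. linear h}"
  shows "\<exists>E\<in>sets (sample_measure D T m). measure (sample_measure D T m) E \<ge> 1 - \<delta> \<and>
    (\<forall>z\<in>E. \<forall>a a0 U. optimal l T m \<gamma> \<beta> z a a0 U \<longrightarrow>
      (\<integral>z'. emp_loss l T m z' a a0 U \<partial>(sample_measure D T m)) - emp_loss l T m z a a0 U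
      \<le> 2 * c * (sqrt (real T / \<gamma>) + sqrt (1 / \<beta>)) * sqrt (\<Sum>t<T. real (m t) * S_X m z t)
        + 3 * B * sqrt ((\<Sum>t<T. real (m t)) * ln (2 / \<delta>) / 2))"
proof -
  obtain E where E: "E \<in> sets (sample_measure D T m)" "measure (sample_measure D T m) E \<ge> 1 - \<delta>"
    and bound: "\<And>z a a0 U. z \<in> E \<Longrightarrow> feasible T \<gamma> \<beta> a a0 U \<Longrightarrow>
      (\<integral>z'. emp_loss l T m z' a a0 U \<partial>sample_measure D T m) - emp_loss l T m z a a0 U
      \<le> 2 * c * (sqrt (real T / \<gamma>) + sqrt (1 / \<beta>)) * sqrt (\<Sum>ti\<in>sample_idx T m. (norm (fst (z ti)))\<^sup>2)
        + 3 * B * sqrt (real (card (sample_idx T m)) * ln (1 / \<delta>) / 2)"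
    using feasible_deviation_high_probability[where m=m, OF \<gamma> \<beta> \<delta> D_prob D_sets l_meas l_bounded l_adm] by blast
  have "3 * B * sqrt (real (card (sample_idx T m)) * ln (1 / \<delta>) / 2)
      \<le> 3 * B * sqrt ((\<Sum>t<T. real (m t)) * ln (2 / \<delta>) / 2)"
    using l_bounded \<delta> unfolding card_sample_idx
    by (intro mult_left_mono real_sqrt_le_mono divide_right_mono mult_left_mono sum_nonneg)
      (auto intro: order_trans divide_right_mono)
  then show ?thesis
    using E bound by (force simp: sum_S_X_eq[OF m_pos] optimal_def)
qed

lemma averaged_deviation_le:
  fixes D :: "nat \<Rightarrow> ((real^'d) \<times> real) measure" and l :: "real \<Rightarrow> real \<Rightarrow> real" and mm :: nat
  assumes T_pos: "T \<ge> 1" and mm: "mm \<ge> 1" and m_eq: "\<forall>t<T. m t = mm"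
    and \<gamma>: "\<gamma> > 0" and \<beta>: "\<beta> > 0" and \<delta>: "\<delta> > 0" and c: "c \<ge> 0"
    and D_prob: "\<forall>t<T. prob_space (D t)"
    and D_sets: "\<forall>t<T. sets (D t) = sets (borel :: ((real^'d) \<times> real) measure)"
    and l_meas: "case_prod l \<in> borel_measurable borel"
    and l_bounded: "\<forall>y p. 0 \<le> l y p \<and> l y p \<le> B"
    and norms: "\<forall>ti\<in>sample_idx T m. norm (fst (z ti)) \<le> r"
    and deviation: "(\<integral>z'. emp_loss l T m z' a a0 U \<partial>sample_measure D T m) - emp_loss l T m z a a0 U
      \<le> 2 * c * (sqrt (real T / \<gamma>) + sqrt (1 / \<beta>)) * sqrt (\<Sum>ti\<in>sample_idx T m. (norm (fst (z ti)))\<^sup>2)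
        + 3 * B * sqrt (real (card (sample_idx T m)) * ln (1 / \<delta>) / 2)"
  shows "(1 / real T) * (\<Sum>t<T. \<integral>p. l (snd p) (pred a a0 U t (fst p)) \<partial>(D t))
      - (1 / real T) * (\<Sum>t<T. (1 / real mm) * (\<Sum>i<mm. l (snd (z (t,i))) (pred a a0 U t (fst (z (t,i))))))
    \<le> 2 * c * r / sqrt (\<gamma> * real mm) + 2 * c * r / sqrt (\<beta> * real mm * real T)
      + 3 * B * sqrt (ln (2 / \<delta>) / (2 * real mm * real T))"
proof -
  let ?I = "sample_idx T m"
  have card_I: "real (card ?I) = real mm * real T" using m_eq by (simp add: card_sample_idx)
  have "(0, 0) \<in> ?I" using T_pos mm m_eq by (auto simp: sample_idx_def)
  then have r: "r \<ge> 0" using norms norm_ge_zero order_trans by blast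
  have "(\<Sum>ti\<in>?I. (norm (fst (z ti)))\<^sup>2) \<le> (\<Sum>ti\<in>?I. r\<^sup>2)"
    using norms by (intro sum_mono power_mono) auto
  then have sum_le: "(\<Sum>ti\<in>?I. (norm (fst (z ti)))\<^sup>2) \<le> real mm * real T * r\<^sup>2" using card_I by simp
  have "3 * B * sqrt (real mm * real T * ln (1 / \<delta>) / 2) \<le> 3 * B * sqrt (real mm * real T * ln (2 / \<delta>) / 2)"
    using l_bounded \<delta> by (intro mult_left_mono real_sqrt_le_mono divide_right_mono mult_left_mono)
      (auto intro: order_trans divide_right_mono)
  with deviation card_I have total:
    "(\<integral>z'. emp_loss l T m z' a a0 U \<partial>sample_measure D T m) - emp_loss l T m z a a0 U
      \<le> 2 * c * (sqrt (real T / \<gamma>) + sqrt (1 / \<beta>)) * sqrt (\<Sum>ti\<in>?I. (norm (fst (z ti)))\<^sup>2)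
        + 3 * B * sqrt (real mm * real T * ln (2 / \<delta>) / 2)"
    by simp
  define A where "A = (\<Sum>t<T. \<integral>p. l (snd p) (pred a a0 U t (fst p)) \<partial>(D t))"
  define Z where "Z = (\<Sum>t<T. \<Sum>i<mm. l (snd (z (t,i))) (pred a a0 U t (fst (z (t,i)))))"
  have "(\<integral>z'. emp_loss l T m z' a a0 U \<partial>sample_measure D T m) = real mm * A"
    unfolding expected_emp_loss[OF D_prob D_sets l_meas l_bounded] A_def by (simp add: m_eq sum_distrib_left)
  moreover have "emp_loss l T m z a a0 U = Z"
    unfolding emp_loss_def Z_def by (simp add: m_eq)
  moreover have "(1 / real T) * A - (1 / real T) * (\<Sum>t<T. (1 / real mm) * (\<Sum>i<mm. l (snd (z (t,i))) (pred a a0 U t (fst (z (t,i))))))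
      = (real mm * A - Z) / (real T * real mm)"
    using mm T_pos unfolding Z_def by (simp add: field_simps sum_distrib_left sum_divide_distrib)
  ultimately show ?thesis
    using averaged_bound_arith[OF T_pos mm \<gamma> \<beta> c r sum_le total] unfolding A_def by simp
qed

lemma optimal_deviation_bound_equal_sizes:
  fixes D :: "nat \<Rightarrow> ((real^'d) \<times> real) measure" and l :: "real \<Rightarrow> real \<Rightarrow> real" and mm :: nat
  assumes T_pos: "T \<ge> 1" and m_pos: "\<forall>t<T. m t \<ge> 1"
    and m_eq: "\<forall>t<T. m t = mm" and r: "\<forall>t<T. AE p in D t. norm (fst p) \<le> r"
    and \<gamma>: "\<gamma> > 0" and \<beta>: "\<beta> > 0" and \<delta>: "\<delta> > 0"
    and D_prob: "\<forall>t<T. prob_space (D t)"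
    and D_sets: "\<forall>t<T. sets (D t) = sets (borel :: ((real^'d) \<times> real) measure)"
    and l_meas: "case_prod l \<in> borel_measurable borel"
    and l_bounded: "\<forall>y p. 0 \<le> l y p \<and> l y p \<le> B"
    and l_adm: "admissible l c {h :: real^'d \<Rightarrow> real. linear h}"
  shows "\<exists>E\<in>sets (sample_measure D T m). measure (sample_measure D T m) E \<ge> 1 - \<delta> \<and>
    (\<forall>z\<in>E. \<forall>a a0 U. optimal l T m \<gamma> \<beta> z a a0 U \<longrightarrow>
      (1 / real T) * (\<Sum>t<T. \<integral>p. l (snd p) (pred a a0 U t (fst p)) \<partial>(D t))
      - (1 / real T) * (\<Sum>t<T. (1 / real mm) * (\<Sum>i<mm. l (snd (z (t,i))) (pred a a0 U t (fst (z (t,i))))))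
      \<le> 2 * c * r / sqrt (\<gamma> * real mm) + 2 * c * r / sqrt (\<beta> * real mm * real T)
        + 3 * B * sqrt (ln (2 / \<delta>) / (2 * real mm * real T)))"
proof -
  let ?SM = "sample_measure D T m"
  have mm: "mm \<ge> 1" using m_eq[rule_format, of 0] m_pos[rule_format, of 0] T_pos by simp
  obtain E where E: "E \<in> sets ?SM" "measure ?SM E \<ge> 1 - \<delta>"
    and bound: "\<And>z a a0 U. z \<in> E \<Longrightarrow> feasible T \<gamma> \<beta> a a0 U \<Longrightarrow>
      (\<integral>z'. emp_loss l T m z' a a0 U \<partial>?SM) - emp_loss l T m z a a0 U
      \<le> 2 * c * (sqrt (real T / \<gamma>) + sqrt (1 / \<beta>)) * sqrt (\<Sum>ti\<in>sample_idx T m. (norm (fst (z ti)))\<^sup>2)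
        + 3 * B * sqrt (real (card (sample_idx T m)) * ln (1 / \<delta>) / 2)"
    using feasible_deviation_high_probability[where m=m, OF \<gamma> \<beta> \<delta> D_prob D_sets l_meas l_bounded l_adm] by blast
  define G where "G = {z \<in> space ?SM. \<forall>ti\<in>sample_idx T m. norm (fst (z ti)) \<le> r}"
  note G = AE_sample_norm_le[OF D_prob D_sets r, of m, folded G_def]
  have "measure ?SM (E \<inter> G) = measure ?SM E"
    by (rule measure_eq_AE) (use G E in auto)
  moreover note averaged = averaged_deviation_le[OF T_pos mm m_eq \<gamma> \<beta> \<delta> admissible_linear_lipschitz(1)[OF l_adm]
      D_prob D_sets l_meas l_bounded]
  ultimately show ?thesis
    using E G(1) by (intro bexI[of _ "E \<inter> G"] conjI ballI allI impI averaged bound) (auto simp: G_def optimal_def)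
qed

theorem theorem2:
  fixes D :: "nat \<Rightarrow> ((real^'d) \<times> real) measure"
    and m :: "nat \<Rightarrow> nat" and T :: nat
    and l :: "real \<Rightarrow> real \<Rightarrow> real"
    and B c \<gamma> \<beta> \<delta> :: real
  assumes T_pos: "T \<ge> 1"
    and m_pos: "\<forall>t<T. m t \<ge> 1"
    and gamma: "\<gamma> > 0" and beta: "\<beta> > 0" and delta: "\<delta> > 0"
    and D_prob: "\<forall>t<T. prob_space (D t)"
    and D_sets: "\<forall>t<T. sets (D t) = sets (borel :: ((real^'d) \<times> real) measure)"
    and l_meas: "case_prod l \<in> borel_measurable borel"
    and l_bounded: "\<forall>y p. 0 \<le> l y p \<and> l y p \<le> B"
    and l_adm: "admissible l c {h :: real^'d \<Rightarrow> real. linear h}"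
  shows
    "(\<exists>E\<in>sets (sample_measure D T m). measure (sample_measure D T m) E \<ge> 1 - \<delta> \<and>
       (\<forall>z\<in>E. \<forall>a a0 U. optimal l T m \<gamma> \<beta> z a a0 U \<longrightarrow>
          (\<integral>z'. emp_loss l T m z' a a0 U \<partial>(sample_measure D T m)) - emp_loss l T m z a a0 U
          \<le> 2 * c * (sqrt (real T / \<gamma>) + sqrt (1 / \<beta>)) * sqrt (\<Sum>t<T. real (m t) * S_X m z t)
            + 3 * B * sqrt ((\<Sum>t<T. real (m t)) * ln (2 / \<delta>) / 2))) \<and>
     (\<forall>(mm::nat) (r::real). (\<forall>t<T. m t = mm) \<and> (\<forall>t<T. AE p in D t. norm (fst p) \<le> r) \<longrightarrow>
       (\<exists>E\<in>sets (sample_measure D T m). measure (sample_measure D T m) E \<ge> 1 - \<delta> \<and>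
         (\<forall>z\<in>E. \<forall>a a0 U. optimal l T m \<gamma> \<beta> z a a0 U \<longrightarrow>
            (1 / real T) * (\<Sum>t<T. \<integral>p. l (snd p) (pred a a0 U t (fst p)) \<partial>(D t))
            - (1 / real T) * (\<Sum>t<T. (1 / real mm) * (\<Sum>i<mm. l (snd (z (t,i))) (pred a a0 U t (fst (z (t,i))))))
            \<le> 2 * c * r / sqrt (\<gamma> * real mm) + 2 * c * r / sqrt (\<beta> * real mm * real T)
              + 3 * B * sqrt (ln (2 / \<delta>) / (2 * real mm * real T)))))"
  using optimal_deviation_bound[OF m_pos gamma beta delta D_prob D_sets l_meas l_bounded l_adm]
    optimal_deviation_bound_equal_sizes[OF T_pos m_pos _ _ gamma beta delta D_prob D_sets l_meas l_bounded l_adm]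
  by blast

end
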